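(* Let $G$ be a subgroup of the affine group $\mathcal G$ with a unitary representation $G\ni g\mapsto U_g$ on a separable Hilbert space, and let $\dot A$ be a $G$-invariant closed densely defined symmetric operator with deficiency indices $(1,1)$. Suppose that $\dot A$ has either (i) at least three different self-adjoint $G$-invariant extensions, or (ii) at least two $G$-invariant maximal dissipative extensions, one of which is not self-adjoint. Then every maximal dissipative extension $A$ of $\dot A$ with $\dot A\subset A\subset(\dot A)^*$ is $G$-invariant. Moreover, in this case, if the group $G$ is nontrivial, then $\dot A$ is not semi-bounded.
   Context: $\mathcal G$ is the group (under composition) of affine maps $g(x)=ax+b$ of $\mathbb R$ with $a>0$, $b\in\mathbb R$; for an operator $A$, $g(A)=aA+bI$. A densely defined closed operator $A$ is $G$-invariant (with respect to $g\mapsto U_g$) if $U_g(\mathrm{Dom}(A))=\mathrm{Dom}(A)$ and $U_gAU_g^*f=aAf+bf$ for all $f\in\mathrm{Dom}(A)$ and all $g\in G$. An operator is maximal dissipative if $\operatorname{Im}(Af,f)\ge0$ on its domain and it has no proper dissipative extension. Extensions of $\dot A$ are understood as operators $A$ with $\dot A\subset A\subset(\dot A)^*$. *)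

theory Defs
  imports "HOL-Analysis.Analysis"
begin

class complex_inner = real_normed_vector +
  fixes scaleC :: "complex \<Rightarrow> 'a \<Rightarrow> 'a" (infixr \<open>*\<^sub>C\<close> 75)
    and cinner :: "'a \<Rightarrow> 'a \<Rightarrow> complex"
  assumes scaleC_add_right: "c *\<^sub>C (x + y) = c *\<^sub>C x + c *\<^sub>C y"
    and scaleC_add_left: "(c + d) *\<^sub>C x = c *\<^sub>C x + d *\<^sub>C x"
    and scaleC_scaleC: "c *\<^sub>C (d *\<^sub>C x) = (c * d) *\<^sub>C x"
    and scaleC_one: "1 *\<^sub>C x = x"
    and scaleR_scaleC: "scaleR r x = complex_of_real r *\<^sub>C x"
    and cinner_commute: "cinner x y = cnj (cinner y x)"
    and cinner_add_left: "cinner (x + y) z = cinner x z + cinner y z"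
    and cinner_scaleC_left: "cinner (c *\<^sub>C x) y = c * cinner x y"
    and cinner_self_eq_zero: "cinner x x = 0 \<longleftrightarrow> x = 0"
    and norm_eq_sqrt_cinner: "norm x = sqrt (Re (cinner x x))"

class chilbert_space = complex_inner + complete_space

definition separable_space :: "'h::chilbert_space itself \<Rightarrow> bool" where
  "separable_space _ \<longleftrightarrow> (\<exists>D::'h set. countable D \<and> closure D = UNIV)"

text \<open>A (possibly unbounded) linear operator in 'h is represented by its graph,
a complex linear subspace of 'h \<times> 'h which is the graph of a function.
Extension of operators is inclusion of graphs.\<close>

type_synonym 'h operator = "('h \<times> 'h) set"

definition csubspace :: "'a::complex_inner set \<Rightarrow> bool" where
  "csubspace S \<longleftrightarrow> 0 \<in> S \<and> (\<forall>x\<in>S. \<forall>y\<in>S. x + y \<in> S) \<and> (\<forall>c x. x \<in> S \<longrightarrow> c *\<^sub>C x \<in> S)"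

definition is_operator :: "'h::chilbert_space operator \<Rightarrow> bool" where
  "is_operator A \<longleftrightarrow>
     0 \<in> A
   \<and> (\<forall>p\<in>A. \<forall>q\<in>A. (fst p + fst q, snd p + snd q) \<in> A)
   \<and> (\<forall>c p. p \<in> A \<longrightarrow> (c *\<^sub>C fst p, c *\<^sub>C snd p) \<in> A)
   \<and> (\<forall>y. (0, y) \<in> A \<longrightarrow> y = 0)"

definition op_dom :: "'h operator \<Rightarrow> 'h set" where
  "op_dom A = fst ` A"

definition op_app :: "'h operator \<Rightarrow> 'h \<Rightarrow> 'h" where
  "op_app A f = (THE y. (f, y) \<in> A)"

definition densely_defined :: "'h::chilbert_space operator \<Rightarrow> bool" where
  "densely_defined A \<longleftrightarrow> closure (op_dom A) = UNIV"

definition closed_operator :: "'h::chilbert_space operator \<Rightarrow> bool" where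
  "closed_operator A \<longleftrightarrow> is_operator A \<and> closed A"

definition adjoint :: "'h::chilbert_space operator \<Rightarrow> 'h operator" where
  "adjoint A = {(g, h). \<forall>(f, k)\<in>A. cinner k g = cinner f h}"

definition symmetric_operator :: "'h::chilbert_space operator \<Rightarrow> bool" where
  "symmetric_operator A \<longleftrightarrow> is_operator A \<and> densely_defined A \<and>
     (\<forall>f\<in>op_dom A. \<forall>g\<in>op_dom A. cinner (op_app A f) g = cinner f (op_app A g))"

definition self_adjoint :: "'h::chilbert_space operator \<Rightarrow> bool" where
  "self_adjoint A \<longleftrightarrow> is_operator A \<and> densely_defined A \<and> A = adjoint A"

definition deficiency_space :: "'h::chilbert_space operator \<Rightarrow> complex \<Rightarrow> 'h set" where
  "deficiency_space A z = {g. (g, z *\<^sub>C g) \<in> adjoint A}"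

definition cdim_one :: "'h::chilbert_space set \<Rightarrow> bool" where
  "cdim_one S \<longleftrightarrow> (\<exists>v. v \<noteq> 0 \<and> S = {c *\<^sub>C v | c. True})"

definition deficiency_indices_1_1 :: "'h::chilbert_space operator \<Rightarrow> bool" where
  "deficiency_indices_1_1 A \<longleftrightarrow>
     cdim_one (deficiency_space A \<i>) \<and> cdim_one (deficiency_space A (- \<i>))"

definition dissipative :: "'h::chilbert_space operator \<Rightarrow> bool" where
  "dissipative A \<longleftrightarrow> is_operator A \<and> (\<forall>f\<in>op_dom A. Im (cinner (op_app A f) f) \<ge> 0)"

definition maximal_dissipative :: "'h::chilbert_space operator \<Rightarrow> bool" where
  "maximal_dissipative A \<longleftrightarrow> dissipative A \<and>
     (\<forall>B. dissipative B \<and> A \<subseteq> B \<longrightarrow> B = A)"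

definition semibounded :: "'h::chilbert_space operator \<Rightarrow> bool" where
  "semibounded A \<longleftrightarrow> (\<exists>c::real.
      (\<forall>f\<in>op_dom A. c * (norm f)\<^sup>2 \<le> Re (cinner (op_app A f) f))
    \<or> (\<forall>f\<in>op_dom A. Re (cinner (op_app A f) f) \<le> c * (norm f)\<^sup>2))"

text \<open>The affine map x \<mapsto> a x + b (a > 0) is encoded as the pair (a, b).\<close>
type_synonym affine = "real \<times> real"

definition aff_comp :: "affine \<Rightarrow> affine \<Rightarrow> affine" where
  "aff_comp g h = (fst g * fst h, fst g * snd h + snd g)"   (* (g \<circ> h)(x) = g (h x) *)

definition aff_id :: affine where "aff_id = (1, 0)"

definition aff_inv :: "affine \<Rightarrow> affine" where
  "aff_inv g = (1 / fst g, - snd g / fst g)"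

definition affine_subgroup :: "affine set \<Rightarrow> bool" where
  "affine_subgroup G \<longleftrightarrow> (\<forall>g\<in>G. fst g > 0) \<and> aff_id \<in> G \<and>
     (\<forall>g\<in>G. \<forall>h\<in>G. aff_comp g h \<in> G) \<and> (\<forall>g\<in>G. aff_inv g \<in> G)"

definition unitary :: "('h::chilbert_space \<Rightarrow> 'h) \<Rightarrow> bool" where
  "unitary U \<longleftrightarrow> bij U \<and> (\<forall>x y. U (x + y) = U x + U y) \<and> (\<forall>c x. U (c *\<^sub>C x) = c *\<^sub>C U x)
     \<and> (\<forall>x y. cinner (U x) (U y) = cinner x y)"

definition unitary_rep :: "affine set \<Rightarrow> (affine \<Rightarrow> 'h::chilbert_space \<Rightarrow> 'h) \<Rightarrow> bool" where
  "unitary_rep G U \<longleftrightarrow> (\<forall>g\<in>G. unitary (U g)) \<and>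
     (\<forall>g\<in>G. \<forall>h\<in>G. U (aff_comp g h) = U g \<circ> U h)"

definition G_invariant :: "affine set \<Rightarrow> (affine \<Rightarrow> 'h::chilbert_space \<Rightarrow> 'h) \<Rightarrow> 'h operator \<Rightarrow> bool" where
  "G_invariant G U A \<longleftrightarrow> densely_defined A \<and> closed_operator A \<and>
     (\<forall>g\<in>G. U g ` op_dom A = op_dom A \<and>
        (\<forall>f\<in>op_dom A. U g (op_app A (inv (U g) f))
                        = complex_of_real (fst g) *\<^sub>C op_app A f + complex_of_real (snd g) *\<^sub>C f))"

end

theory Submission
  imports Defs
begin

text \<open>
  By von Neumann's formula, \<open>A\<^sub>0\<^sup>* / A\<^sub>0\<close> is two-dimensional with coordinates \<open>(a, b)\<close> along
  the deficiency vectors, and the boundary form of \<open>A\<^sub>0\<^sup>*\<close> becomes the Hermitian form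
  \<open>|a|\<^sup>2 P - |b|\<^sup>2 Q\<close> of signature (1, 1). Proper dissipative extensions are the lines on which
  this form is \<open>\<ge> 0\<close>, the self-adjoint ones those on which it vanishes. Each \<open>g = (a, b) \<in> G\<close>
  acts on \<open>A\<^sub>0\<^sup>* / A\<^sub>0\<close> by a \<open>2\<times>2\<close> matrix multiplying the form by \<open>1/a\<close>, and \<open>G\<close>-invariant
  extensions are its eigenlines. Three eigenlines, or two of which one is strictly
  dissipative (its form-orthogonal complement is then a third one), force the matrix to be
  scalar, so \<open>g\<close> fixes every extension.

  If moreover \<open>A\<^sub>0 \<ge> C\<close> and \<open>g \<noteq> id\<close>, then for \<open>\<mu> \<ll> C\<close> avoiding the fixed point of \<open>g\<close>
  there is an eigenvector \<open>A\<^sub>0\<^sup>* u = \<mu> u\<close>; \<open>U\<^sub>g u\<close> is an eigenvector for \<open>(\<mu> - b)/a\<close>, orthogonal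
  to \<open>u\<close>, and since \<open>g\<close> acts as a scalar \<open>c\<close>, \<open>U\<^sub>g u - c u \<in> Dom A\<^sub>0\<close>. On this vector the quadratic
  form of \<open>A\<^sub>0\<close> is \<open>((\<mu> - b)/a + |c|\<^sup>2 \<mu>) \<parallel>u\<parallel>\<^sup>2\<close>, which violates the lower bound for \<open>\<mu> \<rightarrow> -\<infinity>\<close>
  (symmetrically for an upper bound).
\<close>

section \<open>Complex inner product spaces\<close>

lemma scaleC_zero_left [simp]: "0 *\<^sub>C x = 0"
  using scaleR_scaleC[of 0 x] by simp

lemma scaleC_zero_right [simp]: "c *\<^sub>C 0 = 0"
proof -
  have "c *\<^sub>C 0 = c *\<^sub>C 0 + c *\<^sub>C 0" using scaleC_add_right[of c 0 0] by simp
  then show ?thesis by simp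
qed

lemma scaleC_minus_one [simp]: "(-1) *\<^sub>C x = - x"
  using scaleR_scaleC[of "-1" x] by simp

lemma scaleC_minus_left: "(- c) *\<^sub>C x = - (c *\<^sub>C x)"
proof -
  have "(- c) *\<^sub>C x + c *\<^sub>C x = 0" using scaleC_add_left[of "-c" c x] by simp
  then show ?thesis by (simp add: eq_neg_iff_add_eq_0)
qed

lemma scaleC_minus_right: "c *\<^sub>C (- x) = - (c *\<^sub>C x)"
  by (metis mult.commute scaleC_minus_left scaleC_minus_one scaleC_scaleC)

lemma scaleC_diff_right: "c *\<^sub>C (x - y) = c *\<^sub>C x - c *\<^sub>C y"
  using scaleC_add_right[of c x "-y"] by (simp add: scaleC_minus_right)

lemma scaleC_diff_left: "(c - d) *\<^sub>C x = c *\<^sub>C x - d *\<^sub>C x"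
  using scaleC_add_left[of c "-d" x] by (simp add: scaleC_minus_left)

lemma cinner_add_right: "cinner x (y + z) = cinner x y + cinner x z"
  by (metis cinner_add_left cinner_commute complex_cnj_add)

lemma cinner_scaleC_right: "cinner x (c *\<^sub>C y) = cnj c * cinner x y"
  by (metis cinner_commute cinner_scaleC_left complex_cnj_mult complex_cnj_cnj)

lemma cinner_zero_left [simp]: "cinner 0 x = 0"
  using cinner_scaleC_left[of 0 0 x] by simp

lemma cinner_zero_right [simp]: "cinner x 0 = 0"
  using cinner_scaleC_right[of x 0 0] by simp

lemma cinner_minus_left: "cinner (- x) y = - cinner x y"
  using cinner_scaleC_left[of "-1" x y] by simp

lemma cinner_minus_right: "cinner x (- y) = - cinner x y"
  using cinner_scaleC_right[of x "-1" y] by simp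

lemma cinner_diff_left: "cinner (x - y) z = cinner x z - cinner y z"
  using cinner_add_left[of x "-y" z] by (simp add: cinner_minus_left)

lemma cinner_diff_right: "cinner x (y - z) = cinner x y - cinner x z"
  using cinner_add_right[of x y "-z"] by (simp add: cinner_minus_right)

lemmas cinner_simps =
  cinner_add_left cinner_add_right cinner_diff_left cinner_diff_right
  cinner_scaleC_left cinner_scaleC_right

lemma Im_cinner_self [simp]: "Im (cinner x x) = 0"
  using arg_cong[OF cinner_commute[of x x], of Im] by simp

lemma Re_cinner_self_ge0: "Re (cinner x x) \<ge> 0"
proof (rule ccontr)
  assume "\<not> ?thesis"
  then have "sqrt (Re (cinner x x)) < 0" by simp
  then show False using norm_eq_sqrt_cinner[of x] norm_ge_zero[of x] by linarith
qed

lemma power2_norm_eq_cinner: "(norm x)\<^sup>2 = Re (cinner x x)"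
  using norm_eq_sqrt_cinner[of x] Re_cinner_self_ge0[of x] by simp

lemma cinner_self_eq_norm: "cinner x x = complex_of_real ((norm x)\<^sup>2)"
  by (simp add: power2_norm_eq_cinner complex_eq_iff)

lemma norm_add_power2: "(norm (x + y))\<^sup>2 = (norm x)\<^sup>2 + (norm y)\<^sup>2 + 2 * Re (cinner x y)"
proof -
  have "cinner (x + y) (x + y) = cinner x x + cinner y y + (cinner x y + cnj (cinner x y))"
    by (simp add: cinner_add_left cinner_add_right cinner_commute[of y x] algebra_simps)
  then show ?thesis by (simp add: power2_norm_eq_cinner)
qed

lemma norm_diff_power2: "(norm (x - y))\<^sup>2 = (norm x)\<^sup>2 + (norm y)\<^sup>2 - 2 * Re (cinner x y)"
  using norm_add_power2[of x "-y"] by (simp add: cinner_minus_right)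

lemma norm_scaleC: "norm (c *\<^sub>C x) = cmod c * norm x"
proof -
  have "cinner (c *\<^sub>C x) (c *\<^sub>C x) = (c * cnj c) * cinner x x"
    by (simp add: cinner_scaleC_left cinner_scaleC_right mult.assoc)
  also have "\<dots> = complex_of_real ((cmod c * norm x)\<^sup>2)"
    by (simp add: complex_norm_square[symmetric] cinner_self_eq_norm power_mult_distrib)
  finally have "(norm (c *\<^sub>C x))\<^sup>2 = (cmod c * norm x)\<^sup>2"
    using power2_norm_eq_cinner[of "c *\<^sub>C x"] by simp
  then show ?thesis by (simp add: power2_eq_iff_nonneg)
qed

text \<open>Test with \<open>t = r \<langle>z, u\<rangle>\<close>, \<open>r = 1 / (\<parallel>u\<parallel>\<^sup>2 + 1)\<close>: then
  \<open>\<parallel>z - t u\<parallel>\<^sup>2 = \<parallel>z\<parallel>\<^sup>2 - r |\<langle>z, u\<rangle>|\<^sup>2 (2 - r \<parallel>u\<parallel>\<^sup>2)\<close> with \<open>2 - r \<parallel>u\<parallel>\<^sup>2 > 0\<close>.\<close>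

lemma cinner_eq_0_if_norm_minimal:
  assumes "\<And>t. (norm z)\<^sup>2 \<le> (norm (z - t *\<^sub>C u))\<^sup>2"
  shows "cinner z u = 0"
proof -
  define c where "c = cinner z u"
  define r where "r = 1 / ((norm u)\<^sup>2 + 1)"
  have pos: "(norm u)\<^sup>2 + 1 > 0" by (simp add: add_nonneg_pos)
  then have r0: "r > 0" and r1: "r * (norm u)\<^sup>2 < 1"
    unfolding r_def by (simp_all add: divide_less_eq)
  define t where "t = complex_of_real r * c"
  have cc: "c * cnj c = complex_of_real ((cmod c)\<^sup>2)"
    by (rule complex_norm_square[symmetric])
  have "cinner (z - t *\<^sub>C u) (z - t *\<^sub>C u)
      = cinner z z - cnj t * cinner z u - t * cinner u z + t * cnj t * cinner u u"
    by (simp add: cinner_simps algebra_simps)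
  also have "\<dots> = complex_of_real ((norm z)\<^sup>2 - 2 * r * (cmod c)\<^sup>2 + r * r * (cmod c)\<^sup>2 * (norm u)\<^sup>2)"
    using cc unfolding t_def c_def
    by (simp add: cinner_self_eq_norm cinner_commute[of u z] mult_ac algebra_simps)
  finally have "(norm (z - t *\<^sub>C u))\<^sup>2
      = (norm z)\<^sup>2 - 2 * r * (cmod c)\<^sup>2 + r * r * (cmod c)\<^sup>2 * (norm u)\<^sup>2"
    by (simp add: power2_norm_eq_cinner)
  with assms[of t] have "0 \<le> (r * (cmod c)\<^sup>2) * (r * (norm u)\<^sup>2 - 2)"
    by (simp add: algebra_simps)
  moreover have "r * (norm u)\<^sup>2 - 2 < 0" using r1 by simp
  ultimately have "r * (cmod c)\<^sup>2 \<le> 0" by (simp add: zero_le_mult_iff)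
  then show ?thesis unfolding c_def using r0 by (simp add: mult_le_0_iff)
qed

lemma Cauchy_if_sq_dist_bounded:
  fixes x :: "nat \<Rightarrow> 'a::real_normed_vector"
  assumes "\<And>n k. (norm (x n - x k))\<^sup>2 \<le> 2 * inverse (real (Suc n)) + 2 * inverse (real (Suc k))"
  shows "Cauchy x"
proof (rule metric_CauchyI)
  fix e :: real assume e: "e > 0"
  obtain N :: nat where "4 / e\<^sup>2 < real N" using reals_Archimedean2 by blast
  then have "4 < real (Suc N) * e\<^sup>2"
    using e by (simp add: divide_less_eq algebra_simps) (simp add: add_strict_increasing)
  then have eN: "4 * inverse (real (Suc N)) < e\<^sup>2"
    by (simp add: field_simps del: of_nat_Suc)
  show "\<exists>M. \<forall>m\<ge>M. \<forall>n\<ge>M. dist (x m) (x n) < e"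
  proof (intro exI allI impI)
    fix m n assume "N \<le> m" "N \<le> n"
    then have "inverse (real (Suc m)) \<le> inverse (real (Suc N))"
      "inverse (real (Suc n)) \<le> inverse (real (Suc N))"
      by (simp_all add: le_imp_inverse_le)
    then have "(norm (x m - x n))\<^sup>2 < e\<^sup>2" using assms[of m n] eN by linarith
    then show "dist (x m) (x n) < e" using e by (simp add: dist_norm power_less_imp_less_base)
  qed
qed

lemma closed_csubspace_nearest_point:
  fixes M :: "'a::chilbert_space set"
  assumes sub: "csubspace M" and cl: "closed M"
  shows "\<exists>m\<in>M. \<forall>x\<in>M. (norm (y - m))\<^sup>2 \<le> (norm (y - x))\<^sup>2"
proof -
  define d where "d = Inf ((\<lambda>m. (norm (y - m))\<^sup>2) ` M)"
  have M0: "0 \<in> M" using sub unfolding csubspace_def by simp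
  have bdd: "bdd_below ((\<lambda>m. (norm (y - m))\<^sup>2) ` M)" by (rule bdd_belowI[of _ 0]) auto
  have low: "d \<le> (norm (y - x))\<^sup>2" if "x \<in> M" for x
    unfolding d_def using bdd that by (auto intro!: cInf_lower)
  have "\<exists>m\<in>M. (norm (y - m))\<^sup>2 < d + inverse (real (Suc n))" for n
    using cInf_less_iff[OF _ bdd, of "d + inverse (real (Suc n))"] M0 unfolding d_def by auto
  then obtain m where mM: "\<And>n. m n \<in> M"
    and mle: "\<And>n. (norm (y - m n))\<^sup>2 < d + inverse (real (Suc n))"
    by metis
  have "(norm (m n - m k))\<^sup>2 \<le> 2 * inverse (real (Suc n)) + 2 * inverse (real (Suc k))" for n k
  proof -
    define mid where "mid = scaleR (1/2) (m n + m k)"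
    have "mid \<in> M" unfolding mid_def
      using sub mM unfolding csubspace_def by (metis scaleR_scaleC)
    moreover have "(y - m n) + (y - m k) = scaleR 2 (y - mid)" unfolding mid_def
      by (simp add: algebra_simps scaleR_add_right scaleR_2)
    ultimately have "4 * d \<le> (norm ((y - m n) + (y - m k)))\<^sup>2"
      using low[of mid] by (simp add: power_mult_distrib)
    moreover have "(norm ((y - m n) + (y - m k)))\<^sup>2 + (norm (m n - m k))\<^sup>2
        = 2 * (norm (y - m n))\<^sup>2 + 2 * (norm (y - m k))\<^sup>2"
      using norm_add_power2[of "y - m n" "y - m k"] norm_diff_power2[of "y - m k" "y - m n"]
      by (simp add: cinner_commute[of "y - m k"])
    ultimately show ?thesis using mle[of n] mle[of k] by linarith
  qed
  then obtain l where lim: "m \<longlonglongrightarrow> l"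
    using Cauchy_if_sq_dist_bounded Cauchy_convergent convergent_def by blast
  have "l \<in> M" using closed_sequentially[OF cl] mM lim by blast
  moreover have "(norm (y - l))\<^sup>2 \<le> (norm (y - x))\<^sup>2" if "x \<in> M" for x
  proof (rule LIMSEQ_le)
    show "(\<lambda>n. (norm (y - m n))\<^sup>2) \<longlonglongrightarrow> (norm (y - l))\<^sup>2"
      by (intro tendsto_intros lim)
    show "(\<lambda>n. (norm (y - x))\<^sup>2 + inverse (real (Suc n))) \<longlonglongrightarrow> (norm (y - x))\<^sup>2"
      using tendsto_add[OF tendsto_const LIMSEQ_inverse_real_of_nat] by simp
    show "\<exists>N. \<forall>n\<ge>N. (norm (y - m n))\<^sup>2 \<le> (norm (y - x))\<^sup>2 + inverse (real (Suc n))"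
      using mle low[OF that] by (meson less_imp_le order.strict_trans2 add_right_mono)
  qed
  ultimately show ?thesis by blast
qed

lemma closed_csubspace_orthogonal_decomposition:
  fixes M :: "'a::chilbert_space set"
  assumes sub: "csubspace M" and cl: "closed M"
  shows "\<exists>m\<in>M. \<forall>u\<in>M. cinner (y - m) u = 0"
proof -
  obtain m where mM: "m \<in> M" and min: "\<And>x. x \<in> M \<Longrightarrow> (norm (y - m))\<^sup>2 \<le> (norm (y - x))\<^sup>2"
    using closed_csubspace_nearest_point[OF sub cl] by blast
  have "cinner (y - m) u = 0" if "u \<in> M" for u
  proof (rule cinner_eq_0_if_norm_minimal)
    fix t
    have "m + t *\<^sub>C u \<in> M" using sub mM that unfolding csubspace_def by blast
    from min[OF this] show "(norm (y - m))\<^sup>2 \<le> (norm (y - m - t *\<^sub>C u))\<^sup>2"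
      by (simp add: algebra_simps)
  qed
  with mM show ?thesis by blast
qed

lemma cinner_cauchy_schwarz: "cmod (cinner x y) \<le> norm x * norm y"
proof (cases "y = 0")
  case False
  define t where "t = cinner x y / complex_of_real ((norm y)\<^sup>2)"
  have ny: "norm y > 0" using False by simp
  have cc: "complex_of_real (cmod (cinner x y)) * complex_of_real (cmod (cinner x y))
      = cinner x y * cnj (cinner x y)"
    using complex_norm_square[of "cinner x y"] by (simp add: power2_eq_square)
  have "cinner (x - t *\<^sub>C y) (x - t *\<^sub>C y)
      = cinner x x - cnj t * cinner x y - t * cinner y x + t * cnj t * cinner y y"
    by (simp add: cinner_simps algebra_simps)
  also have "\<dots> = cinner x x - complex_of_real ((cmod (cinner x y))\<^sup>2 / (norm y)\<^sup>2)"
    using ny unfolding t_def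
    by (simp add: cinner_self_eq_norm cinner_commute[of y x] field_simps power2_eq_square cc)
  finally have "(cmod (cinner x y))\<^sup>2 / (norm y)\<^sup>2 \<le> (norm x)\<^sup>2"
    using Re_cinner_self_ge0[of "x - t *\<^sub>C y"] by (simp add: cinner_self_eq_norm)
  then have "(cmod (cinner x y))\<^sup>2 \<le> (norm x * norm y)\<^sup>2"
    using ny by (simp add: field_simps power_mult_distrib)
  then show ?thesis by (rule power2_le_imp_le) simp
qed simp

lemma norm_bound_if_Re_cinner_bound:
  assumes "e * (norm f)\<^sup>2 \<le> \<bar>Re (cinner g f)\<bar>"
  shows "e * norm f \<le> norm g"
proof (cases "f = 0")
  case False
  have "e * (norm f)\<^sup>2 \<le> cmod (cinner g f)" using assms abs_Re_le_cmod order_trans by blast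
  also have "\<dots> \<le> norm g * norm f" by (rule cinner_cauchy_schwarz)
  finally have "e * (norm f)\<^sup>2 \<le> norm g * norm f" .
  then show ?thesis using False by (simp add: power2_eq_square)
qed simp

lemma bounded_linear_cinner_right: "bounded_linear (\<lambda>y. cinner x y)"
proof (rule bounded_linear_intro[where K = "norm x"])
  show "cinner x (scaleR r y) = scaleR r (cinner x y)" for r y
    by (simp add: scaleR_scaleC cinner_scaleC_right scaleR_conv_of_real)
  show "norm (cinner x y) \<le> norm y * norm x" for y
    using cinner_cauchy_schwarz[of x y] by (simp add: mult.commute)
qed (rule cinner_add_right)

lemma bounded_linear_cinner_left: "bounded_linear (\<lambda>x. cinner x y)"
proof (rule bounded_linear_intro[where K = "norm y"])
  show "cinner (scaleR r x) y = scaleR r (cinner x y)" for r x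
    by (simp add: scaleR_scaleC cinner_scaleC_left scaleR_conv_of_real)
  show "norm (cinner x y) \<le> norm x * norm y" for x
    using cinner_cauchy_schwarz[of x y] by simp
qed (rule cinner_add_left)

lemma bounded_linear_scaleC: "bounded_linear (\<lambda>x::'a::complex_inner. c *\<^sub>C x)"
proof (rule bounded_linear_intro[where K = "cmod c"])
  show "c *\<^sub>C scaleR r x = scaleR r (c *\<^sub>C x)" for r and x :: 'a
    by (simp add: scaleR_scaleC scaleC_scaleC mult.commute)
  show "norm (c *\<^sub>C x) \<le> norm x * cmod c" for x :: 'a by (simp add: norm_scaleC mult.commute)
qed (rule scaleC_add_right)

section \<open>Two-by-two matrices with many eigenvectors\<close>

text \<open>A \<open>2\<times>2\<close> matrix with three pairwise independent eigenvectors is scalar: any two of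
  them have eigenvalues summing to the trace, so all eigenvalues agree.\<close>

lemma three_eigenvectors_scalar:
  fixes c11 c12 c21 c22 a1 b1 a2 b2 a3 b3 t1 t2 t3 :: complex
  assumes e1: "c11*a1 + c12*b1 = t1*a1" "c21*a1 + c22*b1 = t1*b1"
    and e2: "c11*a2 + c12*b2 = t2*a2" "c21*a2 + c22*b2 = t2*b2"
    and e3: "c11*a3 + c12*b3 = t3*a3" "c21*a3 + c22*b3 = t3*b3"
    and d12: "a1*b2 - b1*a2 \<noteq> 0" and d13: "a1*b3 - b1*a3 \<noteq> 0" and d23: "a2*b3 - b2*a3 \<noteq> 0"
  shows "c12 = 0 \<and> c21 = 0 \<and> c11 = c22"
proof -
  have trace: "(ti + tj) * (ai*bj - bi*aj) = (c11 + c22) * (ai*bj - bi*aj)"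
    if "c11*ai + c12*bi = ti*ai" "c21*ai + c22*bi = ti*bi"
       "c11*aj + c12*bj = tj*aj" "c21*aj + c22*bj = tj*bj" for ai bi aj bj ti tj :: complex
  proof -
    have "(ti + tj) * (ai*bj - bi*aj) = (ti*ai)*bj - (ti*bi)*aj + ai*(tj*bj) - bi*(tj*aj)"
      by (simp add: algebra_simps)
    also have "\<dots> = (c11*ai + c12*bi)*bj - (c21*ai + c22*bi)*aj + ai*(c21*aj + c22*bj) - bi*(c11*aj + c12*bj)"
      using that by simp
    also have "\<dots> = (c11 + c22) * (ai*bj - bi*aj)" by (simp add: algebra_simps)
    finally show ?thesis .
  qed
  have "t1 + t3 = c11 + c22" "t2 + t3 = c11 + c22"
    using trace[OF e1 e3] trace[OF e2 e3] d13 d23 by simp_all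
  then have t12: "t1 = t2" by (metis add_right_cancel)
  have x1: "(c11 - t1) * a1 + c12 * b1 = 0" "c21 * a1 + (c22 - t1) * b1 = 0"
    using e1 by (simp_all add: algebra_simps)
  have x2: "(c11 - t1) * a2 + c12 * b2 = 0" "c21 * a2 + (c22 - t1) * b2 = 0"
    using e2 t12 by (simp_all add: algebra_simps)
  text \<open>Cramer's rule for the homogeneous system with matrix \<open>C - t\<^sub>1\<close> and columns \<open>(a\<^sub>i, b\<^sub>i)\<close>.\<close>
  have "(c11 - t1) * (a1*b2 - b1*a2) = ((c11 - t1) * a1 + c12 * b1) * b2 - ((c11 - t1) * a2 + c12 * b2) * b1"
    "c12 * (a1*b2 - b1*a2) = ((c11 - t1) * a2 + c12 * b2) * a1 - ((c11 - t1) * a1 + c12 * b1) * a2"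
    "c21 * (a1*b2 - b1*a2) = (c21 * a1 + (c22 - t1) * b1) * b2 - (c21 * a2 + (c22 - t1) * b2) * b1"
    "(c22 - t1) * (a1*b2 - b1*a2) = (c21 * a2 + (c22 - t1) * b2) * a1 - (c21 * a1 + (c22 - t1) * b1) * a2"
    by (simp_all add: algebra_simps)
  then show ?thesis using x1 x2 d12 by simp
qed

text \<open>If \<open>C\<close> multiplies the Hermitian form \<open>\<langle>u, x\<rangle> = u\<^sub>1 x\<^sub>1\<^sup>* P - u\<^sub>2 x\<^sub>2\<^sup>* Q\<close> by \<open>s > 0\<close>, the
  form-orthogonal complement of an eigenvector of positive length is again an eigenline.\<close>

lemma form_orthogonal_eigenvector:
  fixes c11 c12 c21 c22 a b t :: complex and P Q s :: real
  assumes P: "P > 0" and Q: "Q > 0" and s: "s > 0"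
    and pres: "\<And>u1 u2 x1 x2. (c11*u1 + c12*u2) * cnj (c11*x1 + c12*x2) * P - (c21*u1 + c22*u2) * cnj (c21*x1 + c22*x2) * Q
                 = s * (u1 * cnj x1 * P - u2 * cnj x2 * Q)"
    and e: "c11*a + c12*b = t*a" "c21*a + c22*b = t*b"
    and pos: "(cmod a)\<^sup>2 * P - (cmod b)\<^sup>2 * Q > 0"
  shows "\<exists>t'. c11 * (cnj b * Q) + c12 * (cnj a * P) = t' * (cnj b * Q)
            \<and> c21 * (cnj b * Q) + c22 * (cnj a * P) = t' * (cnj a * P)"
proof -
  have "a * cnj a = complex_of_real ((cmod a)\<^sup>2)" "b * cnj b = complex_of_real ((cmod b)\<^sup>2)"
    by (rule complex_norm_square[symmetric])+
  then have norm_form: "a * cnj a * P - b * cnj b * Q = complex_of_real ((cmod a)\<^sup>2 * P - (cmod b)\<^sup>2 * Q)"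
    by simp
  have a: "a \<noteq> 0"
  proof
    assume "a = 0"
    then have "(cmod b)\<^sup>2 * Q < 0" using pos by simp
    moreover have "(cmod b)\<^sup>2 * Q \<ge> 0" using Q by simp
    ultimately show False by simp
  qed
  have "t \<noteq> 0"
  proof
    assume "t = 0"
    then have "complex_of_real s * complex_of_real ((cmod a)\<^sup>2 * P - (cmod b)\<^sup>2 * Q) = 0"
      using pres[of a b a b] e by (simp add: norm_form)
    then show False using s pos by (simp only: of_real_mult[symmetric] of_real_eq_0_iff) simp
  qed
  define z1 where "z1 = c11 * (cnj b * Q) + c12 * (cnj a * P)"
  define z2 where "z2 = c21 * (cnj b * Q) + c22 * (cnj a * P)"
  have "z1 * cnj (t*a) * P - z2 * cnj (t*b) * Q = s * (cnj b * Q * cnj a * P - cnj a * P * cnj b * Q)"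
    using pres[of "cnj b * Q" "cnj a * P" a b] e unfolding z1_def z2_def by simp
  then have "cnj t * (z1 * cnj a * P - z2 * cnj b * Q) = 0" by (simp add: algebra_simps)
  then have zz: "z1 * cnj a * P = z2 * cnj b * Q" using \<open>t \<noteq> 0\<close> by simp
  have cP: "cnj a * complex_of_real P \<noteq> 0" using a P by simp
  have "z1 = z2 / (cnj a * P) * (cnj b * Q)" "z2 = z2 / (cnj a * P) * (cnj a * P)"
    using zz cP by (simp_all add: field_simps)
  then show ?thesis unfolding z1_def z2_def by blast
qed

text \<open>Cauchy-Schwarz for the form: \<open>|a\<^sub>1 a\<^sub>2|P = |b\<^sub>1 b\<^sub>2|Q\<close> together with
  \<open>|a\<^sub>1|\<^sup>2P \<ge> |b\<^sub>1|\<^sup>2Q\<close> and \<open>|a\<^sub>2|\<^sup>2P > |b\<^sub>2|\<^sup>2Q\<close> forces \<open>a\<^sub>1 = b\<^sub>1 = 0\<close>.\<close>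

lemma form_orthogonal_to_positive_vector:
  fixes a1 b1 a2 b2 :: complex and P Q :: real
  assumes P: "P > 0" and Q: "Q > 0"
    and nonneg1: "(cmod a1)\<^sup>2 * P - (cmod b1)\<^sup>2 * Q \<ge> 0"
    and pos2: "(cmod a2)\<^sup>2 * P - (cmod b2)\<^sup>2 * Q > 0"
    and orth: "a1 * cnj a2 * P = b1 * cnj b2 * Q"
  shows "a1 = 0 \<and> b1 = 0"
proof -
  have "cmod a1 * cmod a2 * P = cmod b1 * cmod b2 * Q"
    using arg_cong[OF orth, of cmod] P Q by (simp add: norm_mult)
  then have eq: "((cmod a1)\<^sup>2 * P) * ((cmod a2)\<^sup>2 * P) = ((cmod b1)\<^sup>2 * Q) * ((cmod b2)\<^sup>2 * Q)"
    by (metis (no_types, lifting) mult.assoc mult.left_commute power2_eq_square)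
  define A1 A2 B1 B2 where "A1 = (cmod a1)\<^sup>2 * P" and "A2 = (cmod a2)\<^sup>2 * P"
    and "B1 = (cmod b1)\<^sup>2 * Q" and "B2 = (cmod b2)\<^sup>2 * Q"
  have B: "B1 \<ge> 0" "B2 \<ge> 0" unfolding B1_def B2_def using Q by simp_all
  have AB: "B1 \<le> A1" "B2 < A2" "A1 * A2 = B1 * B2"
    using nonneg1 pos2 eq unfolding A1_def A2_def B1_def B2_def by simp_all
  have "B1 = 0"
  proof (rule ccontr)
    assume "B1 \<noteq> 0"
    then have "B1 * B2 < B1 * A2" using B AB by simp
    also have "\<dots> \<le> A1 * A2" using AB B by (intro mult_right_mono) simp_all
    finally show False using AB by simp
  qed
  then have "A1 = 0" using AB B by simp
  then show ?thesis using \<open>B1 = 0\<close> P Q unfolding A1_def B1_def by simp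
qed

lemma form_preserving_two_eigenvectors_scalar:
  fixes c11 c12 c21 c22 a1 b1 a2 b2 t1 t2 :: complex and P Q s :: real
  assumes P: "P > 0" and Q: "Q > 0" and s: "s > 0"
    and pres: "\<And>u1 u2 x1 x2. (c11*u1 + c12*u2) * cnj (c11*x1 + c12*x2) * P - (c21*u1 + c22*u2) * cnj (c21*x1 + c22*x2) * Q
                 = s * (u1 * cnj x1 * P - u2 * cnj x2 * Q)"
    and e1: "c11*a1 + c12*b1 = t1*a1" "c21*a1 + c22*b1 = t1*b1"
    and e2: "c11*a2 + c12*b2 = t2*a2" "c21*a2 + c22*b2 = t2*b2"
    and d12: "a1*b2 - b1*a2 \<noteq> 0"
    and nonneg1: "(cmod a1)\<^sup>2 * P - (cmod b1)\<^sup>2 * Q \<ge> 0"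
    and pos2: "(cmod a2)\<^sup>2 * P - (cmod b2)\<^sup>2 * Q > 0"
  shows "c12 = 0 \<and> c21 = 0 \<and> c11 = c22"
proof -
  define a3 where "a3 = cnj b2 * Q"
  define b3 where "b3 = cnj a2 * P"
  obtain t3 where e3: "c11*a3 + c12*b3 = t3*a3" "c21*a3 + c22*b3 = t3*b3"
    using form_orthogonal_eigenvector[OF P Q s pres e2 pos2] unfolding a3_def b3_def by blast
  have "a2 * cnj a2 = complex_of_real ((cmod a2)\<^sup>2)" "b2 * cnj b2 = complex_of_real ((cmod b2)\<^sup>2)"
    by (rule complex_norm_square[symmetric])+
  then have "a2*b3 - b2*a3 = complex_of_real ((cmod a2)\<^sup>2 * P - (cmod b2)\<^sup>2 * Q)"
    unfolding a3_def b3_def by (simp add: mult.assoc[symmetric])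
  then have d23: "a2*b3 - b2*a3 \<noteq> 0" using pos2 by (metis of_real_eq_0_iff less_irrefl)
  have d13: "a1*b3 - b1*a3 \<noteq> 0"
  proof
    assume "a1*b3 - b1*a3 = 0"
    then have "a1 * cnj a2 * P = b1 * cnj b2 * Q" unfolding a3_def b3_def by (simp add: algebra_simps)
    with d12 show False using form_orthogonal_to_positive_vector[OF P Q nonneg1 pos2] by simp
  qed
  show ?thesis by (rule three_eigenvectors_scalar[OF e1 e2 e3 d12 d13 d23])
qed

definition scaleC_pair :: "complex \<Rightarrow> 'h::chilbert_space \<times> 'h \<Rightarrow> 'h \<times> 'h" where
  "scaleC_pair c p = (c *\<^sub>C fst p, c *\<^sub>C snd p)"

definition boundary_form :: "'h::chilbert_space \<times> 'h \<Rightarrow> 'h \<times> 'h \<Rightarrow> complex" where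
  "boundary_form p q = cinner (snd p) (fst q) - cinner (fst p) (snd q)"

lemma scaleC_pair_simps [simp]:
  "fst (scaleC_pair c p) = c *\<^sub>C fst p" "snd (scaleC_pair c p) = c *\<^sub>C snd p"
  by (simp_all add: scaleC_pair_def)

lemma scaleC_pair_add: "scaleC_pair c (p + q) = scaleC_pair c p + scaleC_pair c q"
  by (simp add: scaleC_pair_def scaleC_add_right prod_eq_iff)

lemma scaleC_pair_diff: "scaleC_pair c (p - q) = scaleC_pair c p - scaleC_pair c q"
  by (simp add: scaleC_pair_def scaleC_diff_right prod_eq_iff)

lemma scaleC_pair_add_left: "scaleC_pair (c + d) p = scaleC_pair c p + scaleC_pair d p"
  by (simp add: scaleC_pair_def scaleC_add_left prod_eq_iff)

lemma scaleC_pair_diff_left: "scaleC_pair (c - d) p = scaleC_pair c p - scaleC_pair d p"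
  by (simp add: scaleC_pair_def scaleC_diff_left prod_eq_iff)

lemma scaleC_pair_scaleC_pair: "scaleC_pair c (scaleC_pair d p) = scaleC_pair (c * d) p"
  by (simp add: scaleC_pair_def scaleC_scaleC prod_eq_iff)

lemma scaleC_pair_zero [simp]: "scaleC_pair 0 p = 0" "scaleC_pair c 0 = 0"
  by (simp_all add: scaleC_pair_def prod_eq_iff)

lemma scaleC_pair_minus_one: "scaleC_pair (-1) p = - p"
  by (simp add: scaleC_pair_def prod_eq_iff)

lemma operator_zero: "is_operator A \<Longrightarrow> 0 \<in> A"
  unfolding is_operator_def by simp

lemma operator_add: "is_operator A \<Longrightarrow> p \<in> A \<Longrightarrow> q \<in> A \<Longrightarrow> p + q \<in> A"
  unfolding is_operator_def by (metis fst_add snd_add prod.collapse)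

lemma operator_scaleC_pair: "is_operator A \<Longrightarrow> p \<in> A \<Longrightarrow> scaleC_pair c p \<in> A"
  unfolding is_operator_def scaleC_pair_def by blast

lemma operator_diff: "is_operator A \<Longrightarrow> p \<in> A \<Longrightarrow> q \<in> A \<Longrightarrow> p - q \<in> A"
  using operator_add[of A p "- q"] operator_scaleC_pair[of A q "-1"]
  by (simp add: scaleC_pair_minus_one)

lemma operator_single_valued: "is_operator A \<Longrightarrow> (f, k) \<in> A \<Longrightarrow> (f, k') \<in> A \<Longrightarrow> k = k'"
  using operator_diff[of A "(f, k)" "(f, k')"] unfolding is_operator_def by auto

lemma op_app_eqI: "is_operator A \<Longrightarrow> (f, k) \<in> A \<Longrightarrow> op_app A f = k"
  unfolding op_app_def by (rule the_equality) (auto dest: operator_single_valued)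

lemma op_dom_iff: "f \<in> op_dom A \<longleftrightarrow> (\<exists>k. (f, k) \<in> A)"
  unfolding op_dom_def by force

lemma op_app_in_graph: "is_operator A \<Longrightarrow> f \<in> op_dom A \<Longrightarrow> (f, op_app A f) \<in> A"
  using op_dom_iff op_app_eqI by metis

lemma fst_in_op_dom: "p \<in> A \<Longrightarrow> fst p \<in> op_dom A"
  unfolding op_dom_def by simp

lemma dissipative_iff:
  "is_operator A \<Longrightarrow> dissipative A \<longleftrightarrow> (\<forall>p\<in>A. Im (cinner (snd p) (fst p)) \<ge> 0)"
  unfolding dissipative_def
  by (metis op_app_eqI op_app_in_graph op_dom_iff prod.collapse fst_conv snd_conv)

lemma densely_defined_mono: "densely_defined A \<Longrightarrow> A \<subseteq> B \<Longrightarrow> densely_defined B"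
  unfolding densely_defined_def op_dom_def using closure_mono[of "fst ` A" "fst ` B"] by blast

lemma adjoint_iff: "q \<in> adjoint A \<longleftrightarrow> (\<forall>p\<in>A. cinner (snd p) (fst q) = cinner (fst p) (snd q))"
  by (cases q) (simp add: adjoint_def case_prod_beta)

lemma adjoint_add: "p \<in> adjoint A \<Longrightarrow> q \<in> adjoint A \<Longrightarrow> p + q \<in> adjoint A"
  unfolding adjoint_iff by (simp add: cinner_add_right)

lemma adjoint_scaleC_pair: "p \<in> adjoint A \<Longrightarrow> scaleC_pair c p \<in> adjoint A"
  unfolding adjoint_iff by (simp add: cinner_scaleC_right)

lemma adjoint_diff: "p \<in> adjoint A \<Longrightarrow> q \<in> adjoint A \<Longrightarrow> p - q \<in> adjoint A"
  using adjoint_add[of p A "- q"] adjoint_scaleC_pair[of q A "-1"]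
  by (simp add: scaleC_pair_minus_one)

lemma adjoint_antimono: "A \<subseteq> B \<Longrightarrow> adjoint B \<subseteq> adjoint A"
  unfolding adjoint_def by auto

lemma closed_adjoint: "closed (adjoint (A :: 'h::chilbert_space operator))"
proof -
  have "adjoint A = (\<Inter>p\<in>A. {q. cinner (snd p) (fst q) - cinner (fst p) (snd q) = 0})"
    by (auto simp: adjoint_iff) (metis fst_conv snd_conv)
  also have "closed \<dots>"
  proof (intro closed_INT ballI)
    fix p :: "'h \<times> 'h"
    have "bounded_linear (\<lambda>q::'h \<times> 'h. cinner (snd p) (fst q) - cinner (fst p) (snd q))"
      by (intro bounded_linear_sub
          bounded_linear_compose[OF bounded_linear_cinner_right bounded_linear_fst]
          bounded_linear_compose[OF bounded_linear_cinner_right bounded_linear_snd])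
    then show "closed {q. cinner (snd p) (fst q) - cinner (fst p) (snd q) = 0}"
      by (intro closed_Collect_eq) (simp_all add: linear_continuous_on)
  qed
  finally show ?thesis .
qed

lemma boundary_form_eq_0: "p \<in> A \<Longrightarrow> q \<in> adjoint A \<Longrightarrow> boundary_form p q = 0"
  unfolding boundary_form_def adjoint_iff by auto

lemma boundary_form_swap: "boundary_form q p = - cnj (boundary_form p q)"
  unfolding boundary_form_def by (simp add: cinner_commute[of "snd q"] cinner_commute[of "fst q"])

lemma boundary_form_eq_0': "q \<in> adjoint A \<Longrightarrow> p \<in> A \<Longrightarrow> boundary_form q p = 0"
  using boundary_form_eq_0[of p A q] boundary_form_swap[of q p] by simp

lemma boundary_form_diff_left: "boundary_form (p - q) r = boundary_form p r - boundary_form q r"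
  unfolding boundary_form_def by (simp add: cinner_diff_left)

lemma boundary_form_diff_right: "boundary_form p (q - r) = boundary_form p q - boundary_form p r"
  unfolding boundary_form_def by (simp add: cinner_diff_right)

lemma boundary_form_self: "boundary_form p p = \<i> * complex_of_real (2 * Im (cinner (snd p) (fst p)))"
  unfolding boundary_form_def by (simp add: cinner_commute[of "fst p" "snd p"] complex_eq_iff)

lemma Im_cinner_eq_0_if_adjoint:
  assumes "p \<in> A" "p \<in> adjoint A" shows "Im (cinner (snd p) (fst p)) = 0"
  using boundary_form_eq_0[OF assms] boundary_form_self[of p] by simp

lemma symmetric_subset_adjoint: "symmetric_operator A \<Longrightarrow> A \<subseteq> adjoint A"
proof
  fix p assume sym: "symmetric_operator A" and pA: "p \<in> A"
  then have opA: "is_operator A" unfolding symmetric_operator_def by simp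
  show "p \<in> adjoint A" unfolding adjoint_iff
  proof
    fix q assume qA: "q \<in> A"
    have "cinner (op_app A (fst q)) (fst p) = cinner (fst q) (op_app A (fst p))"
      using sym fst_in_op_dom[OF pA] fst_in_op_dom[OF qA] unfolding symmetric_operator_def by blast
    then show "cinner (snd q) (fst p) = cinner (fst q) (snd p)"
      using op_app_eqI[OF opA] pA qA by (metis prod.collapse)
  qed
qed

lemma self_adjoint_dissipative: "self_adjoint B \<Longrightarrow> dissipative B"
  unfolding self_adjoint_def using Im_cinner_eq_0_if_adjoint[of _ B]
  by (simp add: dissipative_iff)

text \<open>Below, \<open>(\<lambda>p. snd p - z *\<^sub>C fst p) ` A\<close> is \<open>ran(A - z)\<close>, and \<open>(w, cnj z *\<^sub>C w) \<in> A\<^sup>*\<close>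
  says \<open>w \<in> ker(A\<^sup>* - z\<^sup>*)\<close>.\<close>

lemma closed_range_if_bounded_below:
  assumes cl: "closed_operator A" and e: "e > 0"
    and bnd: "\<And>p. p \<in> A \<Longrightarrow> e * norm (fst p) \<le> norm (snd p - z *\<^sub>C fst p)"
  shows "closed ((\<lambda>p. snd p - z *\<^sub>C fst p) ` A)"
  unfolding closed_sequential_limits
proof (intro allI impI, elim conjE)
  fix x l assume xR: "\<forall>n. x n \<in> (\<lambda>p. snd p - z *\<^sub>C fst p) ` A" and xl: "x \<longlonglongrightarrow> l"
  have opA: "is_operator A" and clA: "closed A" using cl unfolding closed_operator_def by auto
  have "\<forall>n. \<exists>q. q \<in> A \<and> x n = snd q - z *\<^sub>C fst q" using xR by blast
  then obtain p where pA: "\<And>n. p n \<in> A" and xp: "\<And>n. x n = snd (p n) - z *\<^sub>C fst (p n)"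
    by metis
  have bd: "e * norm (fst (p n) - fst (p m)) \<le> norm (x n - x m)" for n m
    using bnd[OF operator_diff[OF opA pA[of n] pA[of m]]]
    by (simp add: xp scaleC_diff_right algebra_simps)
  have "Cauchy (\<lambda>n. fst (p n))"
  proof (rule metric_CauchyI)
    fix r :: real assume r: "r > 0"
    then have "r * e > 0" using e by simp
    then obtain N where N: "\<forall>m\<ge>N. \<forall>n\<ge>N. dist (x m) (x n) < r * e"
      using LIMSEQ_imp_Cauchy[OF xl] unfolding Cauchy_def by blast
    show "\<exists>N. \<forall>m\<ge>N. \<forall>n\<ge>N. dist (fst (p m)) (fst (p n)) < r"
    proof (intro exI allI impI)
      fix m n assume "N \<le> m" "N \<le> n"
      then have "norm (x m - x n) < e * r" using N by (simp add: dist_norm mult.commute)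
      then have "e * norm (fst (p m) - fst (p n)) < e * r" using bd[of m n] by linarith
      then show "dist (fst (p m)) (fst (p n)) < r" using e by (simp add: dist_norm)
    qed
  qed
  then obtain F where F: "(\<lambda>n. fst (p n)) \<longlonglongrightarrow> F" using Cauchy_convergent convergent_def by blast
  have "(\<lambda>n. x n + z *\<^sub>C fst (p n)) \<longlonglongrightarrow> l + z *\<^sub>C F"
    by (intro tendsto_add xl bounded_linear.tendsto[OF bounded_linear_scaleC] F)
  then have "(\<lambda>n. snd (p n)) \<longlonglongrightarrow> l + z *\<^sub>C F" by (simp add: xp)
  with F have "(\<lambda>n. (fst (p n), snd (p n))) \<longlonglongrightarrow> (F, l + z *\<^sub>C F)"
    by (rule tendsto_Pair)
  then have "p \<longlonglongrightarrow> (F, l + z *\<^sub>C F)" by simp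
  then have "(F, l + z *\<^sub>C F) \<in> A" using closed_sequentially[OF clA, of p] pA by blast
  then show "l \<in> (\<lambda>p. snd p - z *\<^sub>C fst p) ` A"
    by (rule rev_image_eqI) simp
qed

lemma range_deficiency_decomposition:
  assumes opA: "is_operator A" and cl: "closed ((\<lambda>p. snd p - z *\<^sub>C fst p) ` A)"
  shows "\<exists>p\<in>A. \<exists>w. (w, cnj z *\<^sub>C w) \<in> adjoint A \<and> y = (snd p - z *\<^sub>C fst p) + w"
proof -
  define R where "R = (\<lambda>p. snd p - z *\<^sub>C fst p) ` A"
  have "csubspace R"
    unfolding csubspace_def R_def
  proof (intro conjI ballI allI impI)
    show "0 \<in> (\<lambda>p. snd p - z *\<^sub>C fst p) ` A" using operator_zero[OF opA] by force
  next
    fix a b assume "a \<in> (\<lambda>p. snd p - z *\<^sub>C fst p) ` A" "b \<in> (\<lambda>p. snd p - z *\<^sub>C fst p) ` A"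
    then obtain p q where pq: "p \<in> A" "q \<in> A"
      and ab: "a = snd p - z *\<^sub>C fst p" "b = snd q - z *\<^sub>C fst q"
      by blast
    have "a + b = snd (p + q) - z *\<^sub>C fst (p + q)"
      unfolding ab by (simp add: scaleC_add_right algebra_simps)
    then show "a + b \<in> (\<lambda>p. snd p - z *\<^sub>C fst p) ` A"
      using operator_add[OF opA pq] by blast
  next
    fix c a assume "a \<in> (\<lambda>p. snd p - z *\<^sub>C fst p) ` A"
    then obtain p where "p \<in> A" "a = snd p - z *\<^sub>C fst p" by blast
    then show "c *\<^sub>C a \<in> (\<lambda>p. snd p - z *\<^sub>C fst p) ` A"
      by (auto intro!: image_eqI[where x = "scaleC_pair c p"] operator_scaleC_pair[OF opA]
          simp: scaleC_diff_right scaleC_scaleC mult.commute)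
  qed
  then obtain m where "m \<in> R" and orth: "\<forall>u\<in>R. cinner (y - m) u = 0"
    using closed_csubspace_orthogonal_decomposition cl unfolding R_def by blast
  then obtain p where pA: "p \<in> A" and mp: "m = snd p - z *\<^sub>C fst p" unfolding R_def by blast
  have "(y - m, cnj z *\<^sub>C (y - m)) \<in> adjoint A"
    unfolding adjoint_iff fst_conv snd_conv
  proof
    fix q assume "q \<in> A"
    then have "cinner (y - m) (snd q - z *\<^sub>C fst q) = 0" using orth unfolding R_def by blast
    then have "cinner (snd q - z *\<^sub>C fst q) (y - m) = 0"
      by (metis cinner_commute complex_cnj_zero)
    then show "cinner (snd q) (y - m) = cinner (fst q) (cnj z *\<^sub>C (y - m))"
      by (simp add: cinner_diff_left cinner_scaleC_left cinner_scaleC_right)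
  qed
  moreover have "y = (snd p - z *\<^sub>C fst p) + (y - m)" using mp by simp
  ultimately show ?thesis using pA by blast
qed

lemma unitary_add: "unitary V \<Longrightarrow> V (x + y) = V x + V y"
  and unitary_scaleC: "unitary V \<Longrightarrow> V (c *\<^sub>C x) = c *\<^sub>C V x"
  and unitary_cinner: "unitary V \<Longrightarrow> cinner (V x) (V y) = cinner x y"
  and unitary_inv_apply: "unitary V \<Longrightarrow> inv V (V x) = x"
  unfolding unitary_def by (auto simp: bij_def)

lemma affine_scaleC_eq_iff:
  fixes X Y f :: "'a::complex_inner"
  assumes "a > 0"
  shows "X = complex_of_real a *\<^sub>C Y + complex_of_real b *\<^sub>C f
    \<longleftrightarrow> Y = (1 / complex_of_real a) *\<^sub>C (X - complex_of_real b *\<^sub>C f)"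
proof
  assume "X = complex_of_real a *\<^sub>C Y + complex_of_real b *\<^sub>C f"
  then show "Y = (1 / complex_of_real a) *\<^sub>C (X - complex_of_real b *\<^sub>C f)"
    using assms by (simp add: scaleC_scaleC scaleC_one)
next
  assume "Y = (1 / complex_of_real a) *\<^sub>C (X - complex_of_real b *\<^sub>C f)"
  then have "complex_of_real a *\<^sub>C Y = X - complex_of_real b *\<^sub>C f"
    using assms by (simp add: scaleC_scaleC scaleC_one)
  then show "X = complex_of_real a *\<^sub>C Y + complex_of_real b *\<^sub>C f" by (simp add: algebra_simps)
qed

text \<open>The action of \<open>g = (a, b)\<close> on graphs, \<open>(f, Af) \<mapsto> (U\<^sub>g f, a\<^sup>-\<^sup>1 (U\<^sub>g Af - b U\<^sub>g f))\<close>: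
  it maps the graph of \<open>A\<close> to the graph of \<open>a\<^sup>-\<^sup>1 (U\<^sub>g A U\<^sub>g\<^sup>* - b)\<close>, so \<open>A\<close> is \<open>G\<close>-invariant
  iff its graph is invariant under all these maps.\<close>

definition affine_transform :: "(affine \<Rightarrow> 'h::chilbert_space \<Rightarrow> 'h) \<Rightarrow> affine \<Rightarrow> 'h \<times> 'h \<Rightarrow> 'h \<times> 'h" where
  "affine_transform U g p = (U g (fst p),
     (1 / complex_of_real (fst g)) *\<^sub>C (U g (snd p) - complex_of_real (snd g) *\<^sub>C U g (fst p)))"

lemma G_invariant_operator: "G_invariant G U B \<Longrightarrow> is_operator B"
  unfolding G_invariant_def closed_operator_def by simp

lemma G_invariant_transform_mem:
  assumes inv: "G_invariant G U B" and g: "g \<in> G" and un: "unitary (U g)" and a: "fst g > 0"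
    and pB: "p \<in> B"
  shows "affine_transform U g p \<in> B"
proof -
  have opB: "is_operator B" using G_invariant_operator[OF inv] .
  have dom: "U g (fst p) \<in> op_dom B" and
    "U g (op_app B (inv (U g) (U g (fst p))))
      = complex_of_real (fst g) *\<^sub>C op_app B (U g (fst p)) + complex_of_real (snd g) *\<^sub>C U g (fst p)"
    using inv g fst_in_op_dom[OF pB] unfolding G_invariant_def by blast+
  moreover have "op_app B (inv (U g) (U g (fst p))) = snd p"
    using op_app_eqI[OF opB] pB by (simp add: unitary_inv_apply[OF un])
  ultimately have "U g (snd p)
      = complex_of_real (fst g) *\<^sub>C op_app B (U g (fst p)) + complex_of_real (snd g) *\<^sub>C U g (fst p)"
    by simp
  then have "op_app B (U g (fst p))
      = (1 / complex_of_real (fst g)) *\<^sub>C (U g (snd p) - complex_of_real (snd g) *\<^sub>C U g (fst p))"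
    by (rule affine_scaleC_eq_iff[OF a, THEN iffD1])
  then show ?thesis
    using op_app_in_graph[OF opB dom] unfolding affine_transform_def by simp
qed

lemma G_invariant_transform_surj:
  assumes inv: "G_invariant G U B" and g: "g \<in> G" and un: "unitary (U g)" and a: "fst g > 0"
    and pB: "p \<in> B"
  shows "\<exists>q\<in>B. p = affine_transform U g q"
proof -
  have opB: "is_operator B" using G_invariant_operator[OF inv] .
  have dom: "U g ` op_dom B = op_dom B"
    and frm: "U g (op_app B (inv (U g) (fst p)))
         = complex_of_real (fst g) *\<^sub>C op_app B (fst p) + complex_of_real (snd g) *\<^sub>C fst p"
    using inv g fst_in_op_dom[OF pB] unfolding G_invariant_def by auto
  obtain f where f: "f \<in> op_dom B" and ff: "fst p = U g f"
    using dom fst_in_op_dom[OF pB] by (metis imageE)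
  have "op_app B (fst p) = snd p" using op_app_eqI[OF opB] pB by (metis prod.collapse)
  with frm have "U g (op_app B f) = complex_of_real (fst g) *\<^sub>C snd p + complex_of_real (snd g) *\<^sub>C fst p"
    using ff by (simp add: unitary_inv_apply[OF un])
  then have "snd p = (1 / complex_of_real (fst g)) *\<^sub>C (U g (op_app B f) - complex_of_real (snd g) *\<^sub>C fst p)"
    by (rule affine_scaleC_eq_iff[OF a, THEN iffD1])
  then have "p = affine_transform U g (f, op_app B f)"
    using ff unfolding affine_transform_def by (simp add: prod_eq_iff)
  then show ?thesis using op_app_in_graph[OF opB f] by blast
qed

lemma unitary_rep_inverse:
  assumes G: "affine_subgroup G" and rep: "unitary_rep G U" and g: "g \<in> G"
  shows "U g (U (aff_inv g) x) = x"
proof -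
  have idG: "aff_id \<in> G" and hG: "aff_inv g \<in> G" and a: "fst g > 0"
    using G g unfolding affine_subgroup_def by auto
  have "aff_comp aff_id aff_id = aff_id" unfolding aff_comp_def aff_id_def by simp
  then have "U aff_id (U aff_id x) = U aff_id x"
    using rep idG unfolding unitary_rep_def by (metis comp_apply)
  then have id: "U aff_id x = x"
    using rep idG unfolding unitary_rep_def unitary_def bij_def by (meson injD)
  have "aff_comp g (aff_inv g) = aff_id"
    using a unfolding aff_comp_def aff_inv_def aff_id_def by simp
  then show ?thesis using rep g hG id unfolding unitary_rep_def by (metis comp_apply)
qed

lemma G_invariant_intro:
  assumes G: "affine_subgroup G" and rep: "unitary_rep G U"
    and dense: "densely_defined B" and cl: "closed_operator B"
    and inv: "\<And>g p. g \<in> G \<Longrightarrow> p \<in> B \<Longrightarrow> affine_transform U g p \<in> B"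
  shows "G_invariant G U B"
proof -
  have opB: "is_operator B" using cl unfolding closed_operator_def by simp
  have img: "U g f \<in> op_dom B" if g: "g \<in> G" and f: "f \<in> op_dom B" for g f
    using inv[OF g op_app_in_graph[OF opB f]] unfolding affine_transform_def op_dom_iff by auto
  have "U g ` op_dom B = op_dom B \<and>
        (\<forall>f\<in>op_dom B. U g (op_app B (inv (U g) f))
            = complex_of_real (fst g) *\<^sub>C op_app B f + complex_of_real (snd g) *\<^sub>C f)" if g: "g \<in> G" for g
  proof (intro conjI ballI)
    have hG: "aff_inv g \<in> G" and a: "fst g > 0" using G g unfolding affine_subgroup_def by auto
    have un: "unitary (U g)" using rep g unfolding unitary_rep_def by simp
    have surj: "U g (U (aff_inv g) f) = f" for f using unitary_rep_inverse[OF G rep g] .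
    show "U g ` op_dom B = op_dom B"
    proof
      show "op_dom B \<subseteq> U g ` op_dom B"
        using img[OF hG] surj by (metis image_eqI subsetI)
    qed (use img[OF g] in blast)
    fix f assume f: "f \<in> op_dom B"
    define f1 where "f1 = U (aff_inv g) f"
    have f1: "f1 \<in> op_dom B" "U g f1 = f" "inv (U g) f = f1"
      unfolding f1_def using img[OF hG f] surj unitary_inv_apply[OF un] by metis+
    have "affine_transform U g (f1, op_app B f1) \<in> B" using inv[OF g op_app_in_graph[OF opB f1(1)]] .
    then have "(f, (1 / complex_of_real (fst g)) *\<^sub>C (U g (op_app B f1) - complex_of_real (snd g) *\<^sub>C f)) \<in> B"
      by (simp add: affine_transform_def f1(2))
    then have "op_app B f = (1 / complex_of_real (fst g)) *\<^sub>C (U g (op_app B f1) - complex_of_real (snd g) *\<^sub>C f)"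
      by (rule op_app_eqI[OF opB])
    then show "U g (op_app B (inv (U g) f)) = complex_of_real (fst g) *\<^sub>C op_app B f + complex_of_real (snd g) *\<^sub>C f"
      unfolding f1(3) by (rule affine_scaleC_eq_iff[OF a, THEN iffD2])
  qed
  then show ?thesis unfolding G_invariant_def using dense cl by blast
qed

section \<open>Symmetric operators with deficiency indices (1, 1)\<close>

text \<open>Coordinates on \<open>A\<^sub>0\<^sup>* / A\<^sub>0\<close>: by von Neumann's formula every \<open>x \<in> A\<^sub>0\<^sup>*\<close> is
  \<open>x \<equiv> a\<cdot>(v\<^sub>+, i v\<^sub>+) + b\<cdot>(v\<^sub>-, -i v\<^sub>-)\<close> modulo \<open>A\<^sub>0\<close>, and the boundary form becomes the
  Hermitian form \<open>2i (a c\<^sup>* P - b d\<^sup>* Q)\<close> of signature (1, 1).\<close>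

locale deficiency_one_one =
  fixes A0 :: "'h::chilbert_space operator" and vp vm :: 'h
  assumes closed0: "closed_operator A0" and sym0: "symmetric_operator A0"
    and def_plus: "deficiency_space A0 \<i> = {c *\<^sub>C vp | c. True}" and vp0: "vp \<noteq> 0"
    and def_minus: "deficiency_space A0 (- \<i>) = {c *\<^sub>C vm | c. True}" and vm0: "vm \<noteq> 0"
begin

definition "defect_plus = (vp, \<i> *\<^sub>C vp)"
definition "defect_minus = (vm, (- \<i>) *\<^sub>C vm)"
definition "P = (norm vp)\<^sup>2"
definition "Q = (norm vm)\<^sup>2"
definition "defect a b = scaleC_pair a defect_plus + scaleC_pair b defect_minus"
definition "defect_form a b c d = a * cnj c * complex_of_real P - b * cnj d * complex_of_real Q"

lemma operator0: "is_operator A0"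
  using closed0 unfolding closed_operator_def by simp

lemma A0_subset_adjoint: "A0 \<subseteq> adjoint A0"
  using sym0 by (rule symmetric_subset_adjoint)

lemma Im_cinner_A0: "p \<in> A0 \<Longrightarrow> Im (cinner (snd p) (fst p)) = 0"
  using A0_subset_adjoint Im_cinner_eq_0_if_adjoint by blast

lemma P_pos: "P > 0" and Q_pos: "Q > 0"
  unfolding P_def Q_def using vp0 vm0 by simp_all

lemma deficiency_plus_iff: "(g, \<i> *\<^sub>C g) \<in> adjoint A0 \<longleftrightarrow> (\<exists>c. g = c *\<^sub>C vp)"
  using def_plus unfolding deficiency_space_def by (auto simp: set_eq_iff)

lemma deficiency_minus_iff: "(g, (- \<i>) *\<^sub>C g) \<in> adjoint A0 \<longleftrightarrow> (\<exists>c. g = c *\<^sub>C vm)"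
  using def_minus unfolding deficiency_space_def by (auto simp: set_eq_iff)

lemma defect_plus_adjoint: "defect_plus \<in> adjoint A0"
  unfolding defect_plus_def using deficiency_plus_iff[of vp] by (metis scaleC_one)

lemma defect_minus_adjoint: "defect_minus \<in> adjoint A0"
  unfolding defect_minus_def using deficiency_minus_iff[of vm] by (metis scaleC_one)

lemma defect_adjoint: "defect a b \<in> adjoint A0"
  unfolding defect_def
  by (intro adjoint_add adjoint_scaleC_pair defect_plus_adjoint defect_minus_adjoint)

lemma defect_diff: "defect a b - defect c d = defect (a - c) (b - d)"
  unfolding defect_def by (simp add: scaleC_pair_diff_left algebra_simps)

lemma scaleC_pair_defect: "scaleC_pair t (defect a b) = defect (t * a) (t * b)"
  unfolding defect_def by (simp add: scaleC_pair_add scaleC_pair_scaleC_pair)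

lemma defect_zero: "defect 0 0 = 0"
  unfolding defect_def by simp

lemma boundary_form_defect: "boundary_form (defect a b) (defect c d) = 2 * \<i> * defect_form a b c d"
  unfolding defect_def defect_form_def boundary_form_def defect_plus_def defect_minus_def P_def Q_def
  by (simp add: cinner_simps cinner_self_eq_norm algebra_simps)

lemma defect_form_self: "defect_form a b a b = complex_of_real ((cmod a)\<^sup>2 * P - (cmod b)\<^sup>2 * Q)"
  using complex_norm_square[of a] complex_norm_square[of b] unfolding defect_form_def by simp

lemma Im_cinner_defect: "Im (cinner (snd (defect a b)) (fst (defect a b))) = (cmod a)\<^sup>2 * P - (cmod b)\<^sup>2 * Q"
  using boundary_form_self[of "defect a b"] boundary_form_defect[of a b a b] defect_form_self[of a b]
  by (simp add: complex_eq_iff)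

lemma defect_in_A0: "defect a b \<in> A0 \<Longrightarrow> a = 0 \<and> b = 0"
  using boundary_form_eq_0[of "defect a b" A0 "defect 1 0"] boundary_form_eq_0[of "defect a b" A0 "defect 0 1"]
  using defect_adjoint P_pos Q_pos by (simp add: boundary_form_defect defect_form_def)

lemma A0_not_self_adjoint: "A0 \<noteq> adjoint A0"
  using defect_adjoint[of 1 0] defect_in_A0[of 1 0] by auto

lemma defect_coords_unique:
  assumes "x - defect a b \<in> A0" "x - defect c d \<in> A0" shows "a = c \<and> b = d"
proof -
  have "(x - defect c d) - (x - defect a b) \<in> A0" using operator_diff[OF operator0 assms(2,1)] .
  then have "defect (a - c) (b - d) \<in> A0" by (simp add: defect_diff[symmetric])
  then show ?thesis using defect_in_A0[of "a - c" "b - d"] by simp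
qed

lemma boundary_form_coords:
  assumes "x - defect a b \<in> A0" "y - defect c d \<in> A0" "y \<in> adjoint A0"
  shows "boundary_form x y = boundary_form (defect a b) (defect c d)"
proof -
  have "boundary_form x y = boundary_form (x - defect a b) y + boundary_form (defect a b) y"
    by (simp add: boundary_form_diff_left)
  also have "boundary_form (x - defect a b) y = 0" using boundary_form_eq_0[OF assms(1,3)] .
  also have "boundary_form (defect a b) y
      = boundary_form (defect a b) (y - defect c d) + boundary_form (defect a b) (defect c d)"
    by (simp add: boundary_form_diff_right)
  also have "boundary_form (defect a b) (y - defect c d) = 0"
    using boundary_form_eq_0'[OF defect_adjoint assms(2)] .
  finally show ?thesis by simp
qed

lemma norm_le_norm_A0_minus_i: "p \<in> A0 \<Longrightarrow> 1 * norm (fst p) \<le> norm (snd p - \<i> *\<^sub>C fst p)"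
  using norm_diff_power2[of "snd p" "\<i> *\<^sub>C fst p"] Im_cinner_A0[of p]
  by (simp add: norm_scaleC cinner_scaleC_right power2_le_imp_le)

text \<open>Von Neumann's formula: decompose \<open>f' - i f \<in> ran(A\<^sub>0 - i) \<oplus> N\<^sub>-\<close> for \<open>x = (f, f') \<in> A\<^sub>0\<^sup>*\<close>;
  what remains after subtracting the \<open>A\<^sub>0\<close>- and \<open>N\<^sub>-\<close>-parts lies in \<open>N\<^sub>+\<close>.\<close>

lemma von_neumann_decomposition: "x \<in> adjoint A0 \<Longrightarrow> \<exists>a b. x - defect a b \<in> A0"
proof -
  assume xadj: "x \<in> adjoint A0"
  have cl: "closed ((\<lambda>p. snd p - \<i> *\<^sub>C fst p) ` A0)"
    by (rule closed_range_if_bounded_below[OF closed0, of 1]) (use norm_le_norm_A0_minus_i in auto)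
  obtain p w where pA: "p \<in> A0" and wadj: "(w, cnj \<i> *\<^sub>C w) \<in> adjoint A0"
    and dec: "snd x - \<i> *\<^sub>C fst x = (snd p - \<i> *\<^sub>C fst p) + w"
    using range_deficiency_decomposition[OF operator0 cl] by blast
  obtain c where wc: "w = c *\<^sub>C vm" using wadj deficiency_minus_iff by auto
  define \<beta> where "\<beta> = \<i> * c / 2"
  define r where "r = x - p - scaleC_pair \<beta> defect_minus"
  have radj: "r \<in> adjoint A0" unfolding r_def
    using A0_subset_adjoint pA xadj by (intro adjoint_diff adjoint_scaleC_pair defect_minus_adjoint) auto
  have "snd r - \<i> *\<^sub>C fst r
      = (snd x - \<i> *\<^sub>C fst x) - (snd p - \<i> *\<^sub>C fst p) + (2 * \<i> * \<beta>) *\<^sub>C vm"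
    unfolding r_def defect_minus_def
    by (simp add: scaleC_add_right scaleC_diff_right scaleC_scaleC scaleC_minus_right algebra_simps
        flip: scaleC_add_left)
  also have "\<dots> = 0" unfolding \<beta>_def dec wc by (simp flip: scaleC_add_left)
  finally have sr: "snd r = \<i> *\<^sub>C fst r" by simp
  then obtain \<alpha> where "fst r = \<alpha> *\<^sub>C vp" using radj deficiency_plus_iff by (metis prod.collapse)
  then have "r = scaleC_pair \<alpha> defect_plus"
    using sr unfolding defect_plus_def scaleC_pair_def by (simp add: scaleC_scaleC mult.commute prod_eq_iff)
  then have "x - defect \<alpha> \<beta> = p" unfolding r_def defect_def by (simp add: algebra_simps)
  with pA show ?thesis by blast
qed

end

context deficiency_one_one
begin

text \<open>\<open>B = A\<^sub>0 \<dotplus> span {defect a b}\<close>; every proper dissipative extension has this form.\<close>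

definition "extension_along B a b \<longleftrightarrow>
  defect a b \<in> B \<and> \<not> (a = 0 \<and> b = 0) \<and> (\<forall>y\<in>B. \<exists>t. y - scaleC_pair t (defect a b) \<in> A0)"

lemma defect_proportional:
  assumes "\<not> (a = 0 \<and> b = 0)" "a * d = b * c"
  obtains t where "defect c d = scaleC_pair t (defect a b)"
proof (cases "a = 0")
  case True
  with assms have "defect c d = scaleC_pair (d / b) (defect a b)"
    by (simp add: scaleC_pair_defect)
  then show ?thesis by (rule that)
next
  case False
  with assms(2) have "c / a * b = d"
    by (metis mult.commute nonzero_mult_div_cancel_left times_divide_eq_left)
  with False have "defect c d = scaleC_pair (c / a) (defect a b)"
    by (simp add: scaleC_pair_defect)
  then show ?thesis by (rule that)
qed

lemma defect_in_extension:
  assumes "is_operator B" "A0 \<subseteq> B" "x \<in> B" "x - defect a b \<in> A0"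
  shows "defect a b \<in> B"
  using operator_diff[of B x "x - defect a b"] assms by auto

text \<open>Two independent defect vectors in \<open>B\<close> would put \<open>(v\<^sub>-, -i v\<^sub>-)\<close>, on which
  \<open>Im \<langle>Af, f\<rangle> = -\<parallel>v\<^sub>-\<parallel>\<^sup>2 < 0\<close>, into \<open>B\<close>.\<close>

lemma dissipative_defects_dependent:
  assumes dB: "dissipative B" and ab: "defect a b \<in> B" and cd: "defect c d \<in> B"
  shows "a * d = b * c"
proof (rule ccontr)
  assume "a * d \<noteq> b * c"
  then have D: "a * d - b * c \<noteq> 0" by simp
  have opB: "is_operator B" using dB unfolding dissipative_def by simp
  have "scaleC_pair (a / (a * d - b * c)) (defect c d) - scaleC_pair (c / (a * d - b * c)) (defect a b)
      = defect 0 1"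
  proof -
    have "a / (a * d - b * c) * d - c / (a * d - b * c) * b = (a * d - b * c) / (a * d - b * c)"
      by (simp only: times_divide_eq_left diff_divide_distrib mult.commute[of c b])
    then have "a / (a * d - b * c) * d - c / (a * d - b * c) * b = 1" using D by simp
    then show ?thesis by (simp add: scaleC_pair_defect defect_diff)
  qed
  moreover have "scaleC_pair (a / (a * d - b * c)) (defect c d) - scaleC_pair (c / (a * d - b * c)) (defect a b) \<in> B"
    by (intro operator_diff operator_scaleC_pair opB ab cd)
  ultimately have "defect 0 1 \<in> B" by simp
  then have "Im (cinner (snd (defect 0 1)) (fst (defect 0 1))) \<ge> 0"
    using dB dissipative_iff[OF opB] by blast
  then show False using Q_pos by (simp add: Im_cinner_defect)
qed

lemma dissipative_extension_along:
  assumes dB: "dissipative B" and sub: "A0 \<subseteq> B" "B \<subseteq> adjoint A0" and ne: "B \<noteq> A0"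
  obtains a b where "extension_along B a b"
proof -
  have opB: "is_operator B" using dB unfolding dissipative_def by simp
  obtain x where xB: "x \<in> B" and xA: "x \<notin> A0" using sub ne by blast
  then obtain a b where xab: "x - defect a b \<in> A0" using von_neumann_decomposition sub by blast
  have LB: "defect a b \<in> B" using defect_in_extension[OF opB sub(1) xB xab] .
  have nz: "\<not> (a = 0 \<and> b = 0)" using xab xA by (auto simp: defect_zero)
  have "\<exists>t. y - scaleC_pair t (defect a b) \<in> A0" if yB: "y \<in> B" for y
  proof -
    obtain c d where ycd: "y - defect c d \<in> A0" using von_neumann_decomposition sub yB by blast
    have "a * d = b * c"
      using dissipative_defects_dependent[OF dB LB defect_in_extension[OF opB sub(1) yB ycd]] .
    then obtain t where "defect c d = scaleC_pair t (defect a b)" using defect_proportional nz by blast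
    then show ?thesis using ycd by metis
  qed
  then show ?thesis using that LB nz unfolding extension_along_def by blast
qed

lemma extension_along_coords:
  assumes "extension_along B a b" "y \<in> B" "y - defect c d \<in> A0" shows "a * d = b * c"
proof -
  obtain t where "y - scaleC_pair t (defect a b) \<in> A0" using assms unfolding extension_along_def by blast
  then have "t * a = c \<and> t * b = d"
    using defect_coords_unique assms(3) by (simp add: scaleC_pair_defect)
  then show ?thesis by (auto simp: algebra_simps)
qed

lemma extension_along_mem:
  assumes ext: "extension_along B a b" and opB: "is_operator B" and sub: "A0 \<subseteq> B"
    and xcd: "x - defect c d \<in> A0" and det: "a * d = b * c"
  shows "x \<in> B"
proof -
  have LB: "defect a b \<in> B" and nz: "\<not> (a = 0 \<and> b = 0)"
    using ext unfolding extension_along_def by auto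
  obtain t where t: "defect c d = scaleC_pair t (defect a b)" using defect_proportional[OF nz det] .
  have "(x - defect c d) + scaleC_pair t (defect a b) \<in> B"
    using operator_add[OF opB _ operator_scaleC_pair[OF opB LB]] xcd sub by blast
  then show ?thesis using t by simp
qed

lemma extension_along_subset:
  assumes e1: "extension_along B a b" and e2: "extension_along B' c d"
    and opB': "is_operator B'" and sub': "A0 \<subseteq> B'" and det: "a * d = b * c"
  shows "B \<subseteq> B'"
proof
  fix y assume "y \<in> B"
  then obtain t where "y - scaleC_pair t (defect a b) \<in> A0" using e1 unfolding extension_along_def by blast
  moreover have "c * (t * b) = d * (t * a)" using det by (simp add: algebra_simps)
  ultimately show "y \<in> B'" using extension_along_mem[OF e2 opB' sub'] by (simp add: scaleC_pair_defect)
qed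

lemma extensions_along_dependent_eq:
  assumes e1: "extension_along B a b" and e2: "extension_along B' c d"
    and op: "is_operator B" "is_operator B'" and sub: "A0 \<subseteq> B" "A0 \<subseteq> B'"
    and det: "a * d = b * c"
  shows "B = B'"
  using extension_along_subset[OF e1 e2 op(2) sub(2) det] extension_along_subset[OF e2 e1 op(1) sub(1)] det
  by (simp add: algebra_simps)

lemma dissipative_extension_along_nonneg:
  assumes "extension_along B a b" and "dissipative B"
  shows "(cmod a)\<^sup>2 * P - (cmod b)\<^sup>2 * Q \<ge> 0"
  using assms dissipative_iff[of B] Im_cinner_defect[of a b]
  unfolding extension_along_def dissipative_def by auto

lemma defect_form_null_orthogonal:
  assumes null: "defect_form a b a b = 0" and nz: "\<not> (a = 0 \<and> b = 0)" and orth: "defect_form a b c d = 0"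
  shows "a * d = b * c"
proof -
  have e1: "a * cnj c * P = b * cnj d * Q" using orth unfolding defect_form_def by simp
  then have "cnj (a * cnj c * complex_of_real P) = cnj (b * cnj d * complex_of_real Q)" by simp
  then have e2: "cnj a * c * P = cnj b * d * Q" by simp
  have e3: "a * cnj a * P = b * cnj b * Q" using null unfolding defect_form_def by simp
  have a0: "a \<noteq> 0" using e3 nz Q_pos by auto
  have "(b * c) * (cnj a * P) = b * (cnj b * d * Q)" using e2 by (simp add: algebra_simps)
  also have "\<dots> = d * (a * cnj a * P)" using e3 by (simp add: algebra_simps)
  finally show ?thesis using a0 P_pos by (simp add: algebra_simps)
qed

lemma extension_along_self_adjoint:
  assumes ext: "extension_along B a b" and opB: "is_operator B" and sub: "A0 \<subseteq> B" "B \<subseteq> adjoint A0"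
    and null: "(cmod a)\<^sup>2 * P = (cmod b)\<^sup>2 * Q"
  shows "self_adjoint B"
proof -
  have LB: "defect a b \<in> B" and nz: "\<not> (a = 0 \<and> b = 0)"
    using ext unfolding extension_along_def by auto
  have w: "defect_form a b a b = 0" using null by (simp add: defect_form_self)
  have "B \<subseteq> adjoint B"
  proof
    fix x assume xB: "x \<in> B"
    show "x \<in> adjoint B" unfolding adjoint_iff
    proof
      fix y assume yB: "y \<in> B"
      obtain s t where "x - scaleC_pair s (defect a b) \<in> A0" "y - scaleC_pair t (defect a b) \<in> A0"
        using ext xB yB unfolding extension_along_def by blast
      then have "boundary_form y x = boundary_form (defect (t * a) (t * b)) (defect (s * a) (s * b))"
        using boundary_form_coords xB sub by (simp add: scaleC_pair_defect subsetD)
      also have "\<dots> = 2 * \<i> * (t * cnj s * defect_form a b a b)"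
        by (simp add: boundary_form_defect defect_form_def algebra_simps)
      finally show "cinner (snd y) (fst x) = cinner (fst y) (snd x)"
        using w unfolding boundary_form_def by simp
    qed
  qed
  moreover have "adjoint B \<subseteq> B"
  proof
    fix y assume yadj: "y \<in> adjoint B"
    then have yA: "y \<in> adjoint A0" using adjoint_antimono[OF sub(1)] by blast
    then obtain c d where ycd: "y - defect c d \<in> A0" using von_neumann_decomposition by blast
    have "boundary_form (defect a b) (defect c d) = boundary_form (defect a b) y"
      using boundary_form_coords[of "defect a b" a b y c d] ycd yA by (simp add: operator_zero[OF operator0])
    also have "\<dots> = 0" using boundary_form_eq_0[OF LB yadj] .
    finally have "a * d = b * c"
      using defect_form_null_orthogonal[OF w nz] by (simp add: boundary_form_defect)
    then show "y \<in> B" using extension_along_mem[OF ext opB sub(1) ycd] by simp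
  qed
  moreover have "densely_defined B"
    using sym0 sub(1) densely_defined_mono unfolding symmetric_operator_def by blast
  ultimately show ?thesis unfolding self_adjoint_def using opB by blast
qed

text \<open>\<open>B\<close> is the kernel in \<open>A\<^sub>0\<^sup>*\<close> of the continuous functional \<open>\<omega>(\<cdot>, z)\<close>, where
  \<open>z = defect (b\<^sup>*/P) (a\<^sup>*/Q)\<close> has \<open>\<omega>(defect c d, z) = 2i (c b - d a)\<close>.\<close>

lemma extension_along_closed:
  assumes ext: "extension_along B a b" and opB: "is_operator B" and sub: "A0 \<subseteq> B" "B \<subseteq> adjoint A0"
  shows "closed B"
proof -
  define z where "z = defect (cnj b / complex_of_real P) (cnj a / complex_of_real Q)"
  have omz: "boundary_form x z = 2 * \<i> * (c * b - d * a)"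
    if "x - defect c d \<in> A0" "x \<in> adjoint A0" for x c d
    using boundary_form_coords[OF that(1), of z "cnj b / complex_of_real P" "cnj a / complex_of_real Q"]
      defect_adjoint P_pos Q_pos
    unfolding z_def by (simp add: operator_zero[OF operator0] boundary_form_defect defect_form_def)
  have "B = adjoint A0 \<inter> {x. cinner (snd x) (fst z) - cinner (fst x) (snd z) = 0}"
  proof (intro set_eqI iffI)
    fix x assume xB: "x \<in> B"
    then have xa: "x \<in> adjoint A0" using sub by blast
    then obtain c d where xcd: "x - defect c d \<in> A0" using von_neumann_decomposition by blast
    have "a * d = b * c" by (rule extension_along_coords[OF ext xB xcd])
    then show "x \<in> adjoint A0 \<inter> {x. cinner (snd x) (fst z) - cinner (fst x) (snd z) = 0}"
      using omz[OF xcd xa] xa unfolding boundary_form_def by (simp add: algebra_simps)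
  next
    fix x assume x: "x \<in> adjoint A0 \<inter> {x. cinner (snd x) (fst z) - cinner (fst x) (snd z) = 0}"
    then obtain c d where xcd: "x - defect c d \<in> A0" using von_neumann_decomposition by blast
    have "a * d = b * c" using x omz[OF xcd] unfolding boundary_form_def by (simp add: algebra_simps)
    then show "x \<in> B" by (rule extension_along_mem[OF ext opB sub(1) xcd])
  qed
  also have "closed \<dots>"
  proof (rule closed_Int[OF closed_adjoint])
    have "bounded_linear (\<lambda>x::'h \<times> 'h. cinner (snd x) (fst z) - cinner (fst x) (snd z))"
      by (intro bounded_linear_sub
          bounded_linear_compose[OF bounded_linear_cinner_left bounded_linear_snd]
          bounded_linear_compose[OF bounded_linear_cinner_left bounded_linear_fst])
    then show "closed {x. cinner (snd x) (fst z) - cinner (fst x) (snd z) = 0}"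
      by (intro closed_Collect_eq) (simp_all add: linear_continuous_on)
  qed
  finally show ?thesis .
qed

end

context deficiency_one_one
begin

text \<open>If \<open>A\<^sub>0 - \<mu>\<close> is bounded below, decompose \<open>(\<mu> - i) v\<^sub>+ \<in> ran(A\<^sub>0 - \<mu>) \<oplus> ker(A\<^sub>0\<^sup>* - \<mu>)\<close>:
  either the kernel part is nonzero, or \<open>f + v\<^sub>+\<close> is an eigenvector, where \<open>(A\<^sub>0 - \<mu>) f = (\<mu> - i) v\<^sub>+\<close>;
  it is nonzero because \<open>Im \<langle>A\<^sub>0 f, f\<rangle> = 0\<close>.\<close>

lemma real_eigenvalue_if_bounded_below:
  assumes e: "e > 0"
    and bnd: "\<And>p. p \<in> A0 \<Longrightarrow> e * (norm (fst p))\<^sup>2 \<le> \<bar>Re (cinner (snd p) (fst p)) - \<mu> * (norm (fst p))\<^sup>2\<bar>"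
  shows "\<exists>u. u \<noteq> 0 \<and> (u, complex_of_real \<mu> *\<^sub>C u) \<in> adjoint A0"
proof -
  have "e * norm (fst p) \<le> norm (snd p - complex_of_real \<mu> *\<^sub>C fst p)" if "p \<in> A0" for p
    using norm_bound_if_Re_cinner_bound[of e "fst p" "snd p - complex_of_real \<mu> *\<^sub>C fst p"] bnd[OF that]
    by (simp add: cinner_diff_left cinner_scaleC_left cinner_self_eq_norm)
  then have cl: "closed ((\<lambda>p. snd p - complex_of_real \<mu> *\<^sub>C fst p) ` A0)"
    using closed_range_if_bounded_below[OF closed0 e] by blast
  obtain p w where pA: "p \<in> A0" and wadj: "(w, cnj (complex_of_real \<mu>) *\<^sub>C w) \<in> adjoint A0"
    and dec: "(complex_of_real \<mu> - \<i>) *\<^sub>C vp = (snd p - complex_of_real \<mu> *\<^sub>C fst p) + w"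
    using range_deficiency_decomposition[OF operator0 cl] by blast
  show ?thesis
  proof (cases "w = 0")
    case False
    then show ?thesis using wadj by auto
  next
    case True
    define u where "u = fst p + vp"
    have sp: "snd p = complex_of_real \<mu> *\<^sub>C fst p + (complex_of_real \<mu> - \<i>) *\<^sub>C vp"
      using dec True by (simp add: algebra_simps)
    have "p + defect_plus = (u, complex_of_real \<mu> *\<^sub>C u)"
      unfolding u_def defect_plus_def using sp
      by (simp add: prod_eq_iff scaleC_add_right scaleC_diff_left)
    moreover have "p + defect_plus \<in> adjoint A0"
      using adjoint_add A0_subset_adjoint pA defect_plus_adjoint by blast
    moreover have "u \<noteq> 0"
    proof
      assume "u = 0"
      then have "fst p = - vp" unfolding u_def by (simp add: eq_neg_iff_add_eq_0)
      moreover from this have "snd p = - (\<i> *\<^sub>C vp)"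
        using sp by (simp add: scaleC_diff_left scaleC_minus_right)
      ultimately have "Im (cinner (snd p) (fst p)) = P"
        unfolding P_def by (simp add: cinner_minus_left cinner_minus_right cinner_scaleC_left cinner_self_eq_norm)
      then show False using Im_cinner_A0[OF pA] P_pos by simp
    qed
    ultimately show ?thesis by auto
  qed
qed

end

locale invariant_deficiency_one_one = deficiency_one_one A0 vp vm
  for A0 :: "'h::chilbert_space operator" and vp vm +
  fixes G :: "affine set" and U :: "affine \<Rightarrow> 'h \<Rightarrow> 'h"
  assumes G: "affine_subgroup G" and rep: "unitary_rep G U" and inv0: "G_invariant G U A0"
begin

abbreviation "S g \<equiv> affine_transform U g"

lemma unitary_U: "g \<in> G \<Longrightarrow> unitary (U g)"
  using rep unfolding unitary_rep_def by simp

lemma fst_pos: "g \<in> G \<Longrightarrow> fst g > 0"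
  using G unfolding affine_subgroup_def by simp

lemma transform_A0: "g \<in> G \<Longrightarrow> p \<in> A0 \<Longrightarrow> S g p \<in> A0"
  using G_invariant_transform_mem[OF inv0 _ unitary_U fst_pos] by blast

lemma transform_add: "g \<in> G \<Longrightarrow> S g (p + q) = S g p + S g q"
  unfolding affine_transform_def using unitary_U[of g]
  by (simp add: unitary_add scaleC_add_right scaleC_diff_right algebra_simps)

lemma transform_scaleC_pair: "g \<in> G \<Longrightarrow> S g (scaleC_pair c p) = scaleC_pair c (S g p)"
  unfolding affine_transform_def scaleC_pair_def using unitary_U[of g]
  by (simp add: unitary_scaleC scaleC_diff_right scaleC_scaleC mult.commute)

lemma transform_diff: "g \<in> G \<Longrightarrow> S g (p - q) = S g p - S g q"
  using transform_add[of g p "- q"] transform_scaleC_pair[of g "-1" q]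
  by (simp add: scaleC_pair_minus_one)

lemma boundary_form_transform:
  "g \<in> G \<Longrightarrow> boundary_form (S g p) (S g q) = boundary_form p q / complex_of_real (fst g)"
  unfolding affine_transform_def boundary_form_def using fst_pos[of g]
  by (simp add: cinner_simps unitary_cinner[OF unitary_U] field_simps)

lemma transform_adjoint:
  assumes g: "g \<in> G" and padj: "p \<in> adjoint A0" shows "S g p \<in> adjoint A0"
  unfolding adjoint_iff
proof
  fix q assume "q \<in> A0"
  then obtain q1 where q1: "q1 \<in> A0" "q = S g q1"
    using G_invariant_transform_surj[OF inv0 g unitary_U fst_pos] g by blast
  then have "boundary_form q (S g p) = 0"
    using boundary_form_transform[OF g] boundary_form_eq_0[OF q1(1) padj] by simp
  then show "cinner (snd q) (fst (S g p)) = cinner (fst q) (snd (S g p))"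
    unfolding boundary_form_def by simp
qed

text \<open>The matrix of \<open>S\<^sub>g\<close> on \<open>A\<^sub>0\<^sup>* / A\<^sub>0\<close> in the coordinates given by \<open>defect\<close>.\<close>

definition "defect_matrix g c11 c12 c21 c22 \<longleftrightarrow>
  (\<forall>u1 u2. S g (defect u1 u2) - defect (c11*u1 + c12*u2) (c21*u1 + c22*u2) \<in> A0)"

lemma defect_matrix_exists:
  assumes g: "g \<in> G" obtains c11 c12 c21 c22 where "defect_matrix g c11 c12 c21 c22"
proof -
  obtain c11 c21 where c1: "S g (defect 1 0) - defect c11 c21 \<in> A0"
    using von_neumann_decomposition[OF transform_adjoint[OF g defect_adjoint]] by blast
  obtain c12 c22 where c2: "S g (defect 0 1) - defect c12 c22 \<in> A0"
    using von_neumann_decomposition[OF transform_adjoint[OF g defect_adjoint]] by blast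
  have "S g (defect u1 u2) - defect (c11*u1 + c12*u2) (c21*u1 + c22*u2)
      = scaleC_pair u1 (S g (defect 1 0) - defect c11 c21) + scaleC_pair u2 (S g (defect 0 1) - defect c12 c22)"
    for u1 u2
    using transform_add[OF g] transform_scaleC_pair[OF g]
    by (simp add: defect_def scaleC_pair_diff scaleC_pair_add scaleC_pair_scaleC_pair
        scaleC_pair_add_left algebra_simps)
  then have "defect_matrix g c11 c12 c21 c22"
    unfolding defect_matrix_def using c1 c2
    by (simp add: operator_add operator_scaleC_pair operator0)
  then show ?thesis by (rule that)
qed

lemma invariant_extension_eigenvector:
  assumes g: "g \<in> G" and C: "defect_matrix g c11 c12 c21 c22"
    and ext: "extension_along B a b" and inv: "G_invariant G U B"
  shows "\<exists>t. c11*a + c12*b = t*a \<and> c21*a + c22*b = t*b"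
proof -
  have "defect a b \<in> B" using ext unfolding extension_along_def by simp
  then have "S g (defect a b) \<in> B"
    using G_invariant_transform_mem[OF inv g unitary_U[OF g] fst_pos[OF g]] by blast
  then obtain t where "S g (defect a b) - defect (t * a) (t * b) \<in> A0"
    using ext unfolding extension_along_def by (metis scaleC_pair_defect)
  then have "t * a = c11*a + c12*b \<and> t * b = c21*a + c22*b"
    using defect_coords_unique C unfolding defect_matrix_def by blast
  then show ?thesis by (intro exI[of _ t]) simp
qed

lemma defect_matrix_form:
  assumes g: "g \<in> G" and C: "defect_matrix g c11 c12 c21 c22"
  shows "(c11*u1 + c12*u2) * cnj (c11*x1 + c12*x2) * P - (c21*u1 + c22*u2) * cnj (c21*x1 + c22*x2) * Q
       = complex_of_real (1 / fst g) * (u1 * cnj x1 * P - u2 * cnj x2 * Q)"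
proof -
  have "2 * \<i> * defect_form (c11*u1 + c12*u2) (c21*u1 + c22*u2) (c11*x1 + c12*x2) (c21*x1 + c22*x2)
      = boundary_form (S g (defect u1 u2)) (S g (defect x1 x2))"
    using boundary_form_coords[of "S g (defect u1 u2)" _ _ "S g (defect x1 x2)"]
      C transform_adjoint[OF g defect_adjoint]
    unfolding defect_matrix_def by (metis boundary_form_defect)
  also have "\<dots> = 2 * \<i> * (defect_form u1 u2 x1 x2 / complex_of_real (fst g))"
    by (simp add: boundary_form_transform[OF g] boundary_form_defect)
  finally show ?thesis unfolding defect_form_def by (simp add: divide_inverse mult.commute)
qed

definition "acts_as_scalar g \<longleftrightarrow> (\<exists>c. \<forall>x\<in>adjoint A0. S g x - scaleC_pair c x \<in> A0)"

lemma acts_as_scalar_if_matrix_scalar: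
  assumes g: "g \<in> G" and C: "defect_matrix g c11 c12 c21 c22"
    and sc: "c12 = 0 \<and> c21 = 0 \<and> c11 = c22"
  shows "acts_as_scalar g"
  unfolding acts_as_scalar_def
proof (intro exI ballI)
  fix x assume "x \<in> adjoint A0"
  then obtain a b where xab: "x - defect a b \<in> A0" using von_neumann_decomposition by blast
  have "S g x - scaleC_pair c11 x
      = (S g (x - defect a b) - scaleC_pair c11 (x - defect a b))
        + (S g (defect a b) - defect (c11 * a + c12 * b) (c21 * a + c22 * b))"
    using sc by (simp add: transform_diff[OF g] scaleC_pair_diff scaleC_pair_defect algebra_simps)
  also have "\<dots> \<in> A0"
    using C operator_diff[OF operator0 transform_A0[OF g xab] operator_scaleC_pair[OF operator0 xab]]
    unfolding defect_matrix_def by (blast intro: operator_add[OF operator0])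
  finally show "S g x - scaleC_pair c11 x \<in> A0" .
qed

end

context invariant_deficiency_one_one
begin

lemma invariant_extension_eigenline:
  assumes g: "g \<in> G" and C: "defect_matrix g c11 c12 c21 c22"
    and dB: "dissipative B" and sub: "A0 \<subseteq> B" "B \<subseteq> adjoint A0" and ne: "B \<noteq> A0"
    and inv: "G_invariant G U B"
  obtains a b t where "extension_along B a b" "c11*a + c12*b = t*a" "c21*a + c22*b = t*b"
  using dissipative_extension_along[OF dB sub ne] invariant_extension_eigenvector[OF g C _ inv]
  by metis

lemma extensions_along_independent:
  assumes "extension_along B a b" "extension_along B' c d" "B \<noteq> B'"
    and "is_operator B" "is_operator B'" "A0 \<subseteq> B" "A0 \<subseteq> B'"
  shows "a * d - b * c \<noteq> 0"
  using extensions_along_dependent_eq[OF assms(1,2,4-7)] assms(3) by auto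

lemma acts_as_scalar_if_three_self_adjoint:
  assumes g: "g \<in> G" and ne: "A1 \<noteq> A2" "A1 \<noteq> A3" "A2 \<noteq> A3"
    and ext: "\<forall>B\<in>{A1, A2, A3}. A0 \<subseteq> B \<and> B \<subseteq> adjoint A0 \<and> self_adjoint B \<and> G_invariant G U B"
  shows "acts_as_scalar g"
proof -
  obtain c11 c12 c21 c22 where C: "defect_matrix g c11 c12 c21 c22" using defect_matrix_exists[OF g] .
  have B: "is_operator B" "dissipative B" "A0 \<subseteq> B" "B \<subseteq> adjoint A0" "B \<noteq> A0" "G_invariant G U B"
    if "B \<in> {A1, A2, A3}" for B
    using ext that self_adjoint_dissipative A0_not_self_adjoint unfolding self_adjoint_def by auto
  obtain a1 b1 t1 where l1: "extension_along A1 a1 b1" "c11*a1 + c12*b1 = t1*a1" "c21*a1 + c22*b1 = t1*b1"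
    using invariant_extension_eigenline[OF g C B(2-6)] by blast
  obtain a2 b2 t2 where l2: "extension_along A2 a2 b2" "c11*a2 + c12*b2 = t2*a2" "c21*a2 + c22*b2 = t2*b2"
    using invariant_extension_eigenline[OF g C B(2-6)] by blast
  obtain a3 b3 t3 where l3: "extension_along A3 a3 b3" "c11*a3 + c12*b3 = t3*a3" "c21*a3 + c22*b3 = t3*b3"
    using invariant_extension_eigenline[OF g C B(2-6)] by blast
  have "a1*b2 - b1*a2 \<noteq> 0" "a1*b3 - b1*a3 \<noteq> 0" "a2*b3 - b2*a3 \<noteq> 0"
    using extensions_along_independent[OF l1(1) l2(1) ne(1)] extensions_along_independent[OF l1(1) l3(1) ne(2)]
      extensions_along_independent[OF l2(1) l3(1) ne(3)] B(1,3)
    by (simp_all add: mult.commute)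
  then show ?thesis
    using three_eigenvectors_scalar[OF l1(2,3) l2(2,3) l3(2,3)] acts_as_scalar_if_matrix_scalar[OF g C] by blast
qed

lemma acts_as_scalar_if_two_dissipative:
  assumes g: "g \<in> G" and ne: "A1 \<noteq> A2" and nsa: "\<not> self_adjoint A2"
    and ext: "\<forall>B\<in>{A1, A2}. A0 \<subseteq> B \<and> B \<subseteq> adjoint A0 \<and> maximal_dissipative B \<and> G_invariant G U B"
  shows "acts_as_scalar g"
proof -
  obtain c11 c12 c21 c22 where C: "defect_matrix g c11 c12 c21 c22" using defect_matrix_exists[OF g] .
  text \<open>If one of them were \<open>A\<^sub>0\<close>, maximality would force the other to equal it too.\<close>
  have B: "is_operator B" "dissipative B" "A0 \<subseteq> B" "B \<subseteq> adjoint A0" "B \<noteq> A0" "G_invariant G U B"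
    if "B \<in> {A1, A2}" for B
    using ext that ne unfolding maximal_dissipative_def dissipative_def by auto
  obtain a1 b1 t1 where l1: "extension_along A1 a1 b1" "c11*a1 + c12*b1 = t1*a1" "c21*a1 + c22*b1 = t1*b1"
    using invariant_extension_eigenline[OF g C B(2-6)] by blast
  obtain a2 b2 t2 where l2: "extension_along A2 a2 b2" "c11*a2 + c12*b2 = t2*a2" "c21*a2 + c22*b2 = t2*b2"
    using invariant_extension_eigenline[OF g C B(2-6)] by blast
  have "a1*b2 - b1*a2 \<noteq> 0"
    using extensions_along_independent[OF l1(1) l2(1) ne] B(1,3) by (simp add: mult.commute)
  moreover have "(cmod a1)\<^sup>2 * P - (cmod b1)\<^sup>2 * Q \<ge> 0" "(cmod a2)\<^sup>2 * P - (cmod b2)\<^sup>2 * Q \<ge> 0"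
    using dissipative_extension_along_nonneg l1(1) l2(1) B(2) by auto
  moreover have "(cmod a2)\<^sup>2 * P \<noteq> (cmod b2)\<^sup>2 * Q"
    using extension_along_self_adjoint[OF l2(1)] B(1,3,4) nsa by auto
  moreover have "1 / fst g > 0" using fst_pos[OF g] by simp
  ultimately show ?thesis
    using form_preserving_two_eigenvectors_scalar[OF P_pos Q_pos _ defect_matrix_form[OF g C] l1(2,3) l2(2,3)]
      acts_as_scalar_if_matrix_scalar[OF g C] by simp
qed

lemma dissipative_extension_invariant:
  assumes sc: "\<forall>g\<in>G. acts_as_scalar g"
    and sub: "A0 \<subseteq> A" "A \<subseteq> adjoint A0" and dA: "dissipative A"
  shows "G_invariant G U A"
proof (cases "A = A0")
  case False
  have opA: "is_operator A" using dA unfolding dissipative_def by simp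
  obtain a b where "extension_along A a b" using dissipative_extension_along[OF dA sub False] .
  then have "closed_operator A"
    using extension_along_closed opA sub unfolding closed_operator_def by blast
  moreover have "densely_defined A"
    using sym0 sub(1) densely_defined_mono unfolding symmetric_operator_def by blast
  moreover have "S g p \<in> A" if g: "g \<in> G" and pA: "p \<in> A" for g p
  proof -
    obtain c where "\<forall>x\<in>adjoint A0. S g x - scaleC_pair c x \<in> A0"
      using sc g unfolding acts_as_scalar_def by blast
    then have "S g p - scaleC_pair c p \<in> A" using pA sub by blast
    then have "(S g p - scaleC_pair c p) + scaleC_pair c p \<in> A"
      using operator_add[OF opA _ operator_scaleC_pair[OF opA pA]] by blast
    then show ?thesis by simp
  qed
  ultimately show ?thesis using G_invariant_intro[OF G rep] by blast
qed (simp add: inv0)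

end

subsection \<open>Semi-boundedness\<close>

lemma affine_non_fixed_point:
  fixes a b m :: real
  assumes "a \<noteq> 0" "\<not> (a = 1 \<and> b = 0)"
  obtains \<mu> where "m - 1 \<le> \<mu>" "\<mu> \<le> m" "(\<mu> - b) / a \<noteq> \<mu>"
proof -
  have "\<not> ((m - b) / a = m \<and> (m - 1 - b) / a = m - 1)"
  proof
    assume "(m - b) / a = m \<and> (m - 1 - b) / a = m - 1"
    then have "m - b = a * m" "m - 1 - b = a * (m - 1)" using assms(1) by (simp_all add: field_simps)
    then have "a = 1" "b = 0" by (simp_all add: algebra_simps)
    with assms(2) show False by simp
  qed
  then show ?thesis using that[of m] that[of "m - 1"] by fastforce
qed

context invariant_deficiency_one_one
begin

text \<open>For an eigenvector \<open>A\<^sub>0\<^sup>* u = \<mu> u\<close>, the vector \<open>U\<^sub>g u\<close> is an eigenvector with eigenvalue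
  \<open>(\<mu> - b)/a\<close>; if that differs from \<open>\<mu>\<close> the two are orthogonal, and \<open>S\<^sub>g (u, \<mu>u) - c (u, \<mu>u) \<in> A\<^sub>0\<close>
  gives a test vector on which \<open>\<langle>A\<^sub>0 f, f\<rangle>\<close> is computed explicitly.\<close>

lemma transform_eigenvector_test_pair:
  assumes g: "g \<in> G" and c: "\<forall>x\<in>adjoint A0. S g x - scaleC_pair c x \<in> A0"
    and u: "(u, complex_of_real \<mu> *\<^sub>C u) \<in> adjoint A0"
    and ne: "(\<mu> - snd g) / fst g \<noteq> \<mu>"
  shows "\<exists>p\<in>A0. (norm (fst p))\<^sup>2 = (1 + (cmod c)\<^sup>2) * (norm u)\<^sup>2
              \<and> Re (cinner (snd p) (fst p)) = ((\<mu> - snd g) / fst g + (cmod c)\<^sup>2 * \<mu>) * (norm u)\<^sup>2"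
proof -
  define m where "m = (\<mu> - snd g) / fst g"
  have un: "unitary (U g)" using unitary_U[OF g] .
  define p where "p = S g (u, complex_of_real \<mu> *\<^sub>C u) - scaleC_pair c (u, complex_of_real \<mu> *\<^sub>C u)"
  have pA: "p \<in> A0" unfolding p_def using c u by blast
  have fp: "fst p = U g u - c *\<^sub>C u" unfolding p_def affine_transform_def by simp
  have sp: "snd p = complex_of_real m *\<^sub>C U g u - (c * complex_of_real \<mu>) *\<^sub>C u"
    unfolding p_def affine_transform_def m_def
    by (simp add: unitary_scaleC[OF un] scaleC_scaleC diff_divide_distrib flip: scaleC_diff_left)
  have UU: "cinner (U g u) (U g u) = cinner u u" by (rule unitary_cinner[OF un])
  have "cinner (snd p) u = cinner (fst p) (complex_of_real \<mu> *\<^sub>C u)"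
    using u pA unfolding adjoint_iff by fastforce
  then have "(complex_of_real m - complex_of_real \<mu>) * cinner (U g u) u = 0"
    unfolding sp fp by (simp add: cinner_simps algebra_simps)
  moreover have "m \<noteq> \<mu>" using ne unfolding m_def .
  then have "complex_of_real m - complex_of_real \<mu> \<noteq> 0" by simp
  ultimately have orth: "cinner (U g u) u = 0" "cinner u (U g u) = 0"
    by (simp_all, metis cinner_commute complex_cnj_zero)
  have cc: "c * cnj c = complex_of_real ((cmod c)\<^sup>2)" by (rule complex_norm_square[symmetric])
  have N: "cinner u u = complex_of_real ((norm u)\<^sup>2)" by (rule cinner_self_eq_norm)
  have "cinner (fst p) (fst p) = complex_of_real ((1 + (cmod c)\<^sup>2) * (norm u)\<^sup>2)"
    unfolding fp using orth UU cc N by (simp add: cinner_simps algebra_simps)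
  then have "(norm (fst p))\<^sup>2 = (1 + (cmod c)\<^sup>2) * (norm u)\<^sup>2"
    using power2_norm_eq_cinner[of "fst p"] by simp
  moreover have "cinner (snd p) (fst p) = complex_of_real ((m + (cmod c)\<^sup>2 * \<mu>) * (norm u)\<^sup>2)"
    unfolding fp sp using orth UU cc N by (simp add: cinner_simps algebra_simps)
  ultimately show ?thesis using pA unfolding m_def by auto
qed

lemma not_bounded_below:
  assumes g: "g \<in> G" "g \<noteq> aff_id" and sc: "acts_as_scalar g"
    and low: "\<forall>p\<in>A0. C * (norm (fst p))\<^sup>2 \<le> Re (cinner (snd p) (fst p))"
  shows False
proof -
  obtain c where c: "\<forall>x\<in>adjoint A0. S g x - scaleC_pair c x \<in> A0"
    using sc unfolding acts_as_scalar_def by blast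
  define a b s where "a = fst g" and "b = snd g" and "s = (cmod c)\<^sup>2"
  have a: "a > 0" and nid: "\<not> (a = 1 \<and> b = 0)"
    using fst_pos[OF g(1)] g(2) unfolding a_def b_def aff_id_def by (auto simp: prod_eq_iff)
  obtain \<mu> where \<mu>: "\<mu> \<le> min C (min 0 (a * (C * (1 + s)) + b)) - 1" and nonfix: "(\<mu> - b) / a \<noteq> \<mu>"
    by (rule affine_non_fixed_point[of a b]) (use a nid in auto)
  have "(C - \<mu>) * (norm (fst p))\<^sup>2 \<le> \<bar>Re (cinner (snd p) (fst p)) - \<mu> * (norm (fst p))\<^sup>2\<bar>"
    if "p \<in> A0" for p
  proof -
    have "(C - \<mu>) * (norm (fst p))\<^sup>2 \<le> Re (cinner (snd p) (fst p)) - \<mu> * (norm (fst p))\<^sup>2"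
      using low that by (simp add: left_diff_distrib)
    then show ?thesis by linarith
  qed
  moreover have "C - \<mu> > 0" using \<mu> by simp
  ultimately obtain u where "u \<noteq> 0" and u: "(u, complex_of_real \<mu> *\<^sub>C u) \<in> adjoint A0"
    using real_eigenvalue_if_bounded_below by blast
  then have N: "(norm u)\<^sup>2 > 0" by simp
  obtain p where "p \<in> A0" and n1: "(norm (fst p))\<^sup>2 = (1 + s) * (norm u)\<^sup>2"
    and n2: "Re (cinner (snd p) (fst p)) = ((\<mu> - b) / a + s * \<mu>) * (norm u)\<^sup>2"
    using transform_eigenvector_test_pair[OF g(1) c u] nonfix unfolding a_def b_def s_def by blast
  then have "C * (norm (fst p))\<^sup>2 \<le> Re (cinner (snd p) (fst p))" using low by blast
  then have "(C * (1 + s)) * (norm u)\<^sup>2 \<le> ((\<mu> - b) / a + s * \<mu>) * (norm u)\<^sup>2"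
    unfolding n1 n2 by (simp add: mult.assoc)
  then have "C * (1 + s) \<le> (\<mu> - b) / a + s * \<mu>" using N by simp
  moreover have "\<mu> < a * (C * (1 + s)) + b" using \<mu> by simp
  then have "(\<mu> - b) / a < C * (1 + s)" using a by (simp add: pos_divide_less_eq mult.commute)
  moreover have "s * \<mu> \<le> 0" using \<mu> unfolding s_def by (simp add: mult_nonneg_nonpos)
  ultimately show False by linarith
qed

lemma not_bounded_above:
  assumes g: "g \<in> G" "g \<noteq> aff_id" and sc: "acts_as_scalar g"
    and up: "\<forall>p\<in>A0. Re (cinner (snd p) (fst p)) \<le> C * (norm (fst p))\<^sup>2"
  shows False
proof -
  obtain c where c: "\<forall>x\<in>adjoint A0. S g x - scaleC_pair c x \<in> A0"
    using sc unfolding acts_as_scalar_def by blast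
  define a b s where "a = fst g" and "b = snd g" and "s = (cmod c)\<^sup>2"
  have a: "a > 0" and nid: "\<not> (a = 1 \<and> b = 0)"
    using fst_pos[OF g(1)] g(2) unfolding a_def b_def aff_id_def by (auto simp: prod_eq_iff)
  define M where "M = max C (max 0 (a * (C * (1 + s)) + b)) + 1"
  obtain \<mu> where \<mu>: "\<mu> \<ge> M" and nonfix: "(\<mu> - b) / a \<noteq> \<mu>"
    by (rule affine_non_fixed_point[of a b "M + 1"]) (use a nid in auto)
  have "(\<mu> - C) * (norm (fst p))\<^sup>2 \<le> \<bar>Re (cinner (snd p) (fst p)) - \<mu> * (norm (fst p))\<^sup>2\<bar>"
    if "p \<in> A0" for p
  proof -
    have "(\<mu> - C) * (norm (fst p))\<^sup>2 \<le> \<mu> * (norm (fst p))\<^sup>2 - Re (cinner (snd p) (fst p))"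
      using up that by (simp add: left_diff_distrib)
    then show ?thesis by linarith
  qed
  moreover have "\<mu> - C > 0" using \<mu> unfolding M_def by simp
  ultimately obtain u where "u \<noteq> 0" and u: "(u, complex_of_real \<mu> *\<^sub>C u) \<in> adjoint A0"
    using real_eigenvalue_if_bounded_below by blast
  then have N: "(norm u)\<^sup>2 > 0" by simp
  obtain p where "p \<in> A0" and n1: "(norm (fst p))\<^sup>2 = (1 + s) * (norm u)\<^sup>2"
    and n2: "Re (cinner (snd p) (fst p)) = ((\<mu> - b) / a + s * \<mu>) * (norm u)\<^sup>2"
    using transform_eigenvector_test_pair[OF g(1) c u] nonfix unfolding a_def b_def s_def by blast
  then have "Re (cinner (snd p) (fst p)) \<le> C * (norm (fst p))\<^sup>2" using up by blast
  then have "((\<mu> - b) / a + s * \<mu>) * (norm u)\<^sup>2 \<le> (C * (1 + s)) * (norm u)\<^sup>2"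
    unfolding n1 n2 by (simp add: mult.assoc)
  then have "(\<mu> - b) / a + s * \<mu> \<le> C * (1 + s)" using N by simp
  moreover have "\<mu> > a * (C * (1 + s)) + b" using \<mu> unfolding M_def by simp
  then have "C * (1 + s) < (\<mu> - b) / a" using a by (simp add: pos_less_divide_eq mult.commute)
  moreover have "s * \<mu> \<ge> 0" using \<mu> unfolding M_def s_def by simp
  ultimately show False by linarith
qed

lemma not_semibounded:
  assumes sc: "\<forall>g\<in>G. acts_as_scalar g" and ne: "G \<noteq> {aff_id}"
  shows "\<not> semibounded A0"
proof
  assume "semibounded A0"
  then obtain C where "(\<forall>p\<in>A0. C * (norm (fst p))\<^sup>2 \<le> Re (cinner (snd p) (fst p)))
      \<or> (\<forall>p\<in>A0. Re (cinner (snd p) (fst p)) \<le> C * (norm (fst p))\<^sup>2)"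
    unfolding semibounded_def using fst_in_op_dom op_app_eqI[OF operator0] by (metis prod.collapse)
  moreover obtain g where "g \<in> G" "g \<noteq> aff_id"
    using ne G unfolding affine_subgroup_def by blast
  ultimately show False using not_bounded_below not_bounded_above sc by blast
qed

end

theorem theorem6p3:
  fixes G :: "affine set"
    and U :: "affine \<Rightarrow> 'h::chilbert_space \<Rightarrow> 'h"
    and A0 :: "'h operator"
  assumes sep: "separable_space TYPE('h)"
    and G: "affine_subgroup G"
    and rep: "unitary_rep G U"
    and inv0: "G_invariant G U A0"
    and closed0: "closed_operator A0"
    and sym0: "symmetric_operator A0"
    and def0: "deficiency_indices_1_1 A0"
    and hyp: "(\<exists>A1 A2 A3. A1 \<noteq> A2 \<and> A1 \<noteq> A3 \<and> A2 \<noteq> A3 \<and>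
               (\<forall>B\<in>{A1, A2, A3}. A0 \<subseteq> B \<and> B \<subseteq> adjoint A0 \<and> self_adjoint B \<and> G_invariant G U B))
            \<or> (\<exists>A1 A2. A1 \<noteq> A2 \<and>
               (\<forall>B\<in>{A1, A2}. A0 \<subseteq> B \<and> B \<subseteq> adjoint A0 \<and> maximal_dissipative B \<and> G_invariant G U B)
               \<and> \<not> self_adjoint A2)"
  shows "(\<forall>A. A0 \<subseteq> A \<and> A \<subseteq> adjoint A0 \<and> maximal_dissipative A \<longrightarrow> G_invariant G U A)
       \<and> (G \<noteq> {aff_id} \<longrightarrow> \<not> semibounded A0)"
proof -
  obtain vp vm where "vp \<noteq> 0" "deficiency_space A0 \<i> = {c *\<^sub>C vp | c. True}"
    and "vm \<noteq> 0" "deficiency_space A0 (- \<i>) = {c *\<^sub>C vm | c. True}"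
    using def0 unfolding deficiency_indices_1_1_def cdim_one_def by blast
  then interpret invariant_deficiency_one_one A0 vp vm G U
    by unfold_locales (use closed0 sym0 G rep inv0 in auto)
  have scalar: "\<forall>g\<in>G. acts_as_scalar g"
    using hyp
  proof (elim disjE exE conjE)
    fix A1 A2 A3 assume "A1 \<noteq> A2" "A1 \<noteq> A3" "A2 \<noteq> A3"
      and "\<forall>B\<in>{A1, A2, A3}. A0 \<subseteq> B \<and> B \<subseteq> adjoint A0 \<and> self_adjoint B \<and> G_invariant G U B"
    then show ?thesis using acts_as_scalar_if_three_self_adjoint by blast
  next
    fix A1 A2 assume "A1 \<noteq> A2" "\<not> self_adjoint A2"
      and "\<forall>B\<in>{A1, A2}. A0 \<subseteq> B \<and> B \<subseteq> adjoint A0 \<and> maximal_dissipative B \<and> G_invariant G U B"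
    then show ?thesis using acts_as_scalar_if_two_dissipative by blast
  qed
  show ?thesis
    using dissipative_extension_invariant[OF scalar] not_semibounded[OF scalar]
    unfolding maximal_dissipative_def by simp
qed

end
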